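(* Let $A$ be a Lie conformal algebra and $M$ an $A$-module with a commutative associative product such that $\partial^M$ and all $a_\lambda$ act by derivations. (a) The bracket on $A\otimes M[[x]]$ given by $[a\otimes m(x),b\otimes n(x)]=[a_{\partial_{x_1}}b]\otimes m(x_1)n(x)|_{x_1=x}-a\otimes\langle n(x_1),b_{\lambda_1}m(x)\rangle+b\otimes\langle m(x_1),a_{\lambda_1}n(x)\rangle$ induces a well-defined Lie algebra bracket on $\mathfrak g=\Pi\tilde\Gamma_1=(A\otimes M[[x]])/(\partial\otimes1+1\otimes\partial_x)(A\otimes M[[x]])$ (regarded as an even space). (b) The operator $\partial\otimes1+1\otimes\partial^M$ on $A\otimes M[[x]]$ (with $\partial^M$ acting coefficientwise) is a derivation of this bracket; in particular the operator $\partial(a\otimes m(x))=a\otimes(\partial^M-\partial_x)m(x)$ is a derivation of the Lie algebra $\mathfrak g$, and its kernel $\mathfrak g^\partial=\Pi\Gamma_1$ is a Lie subalgebra.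
   Context: $\mathbb F$ field of characteristic 0, $A$ a Lie conformal algebra, $M$ an $A$-module. $M[[x]]$ is formal power series with coefficients in $M$; $\partial_x=d/dx$. Pairing: for $m(x)=\sum_n m_nx^n\in M[[x]]$ and $p(\lambda)=\sum_np_n\lambda^n\in\mathbb F[\lambda]\otimes M$ (possibly with further coefficients in $M[[x']]$), $\langle m(x_1),p(\lambda_1)\rangle=\sum_n n!\,m_np_n$ (product in $M$), i.e. $x_1$ is contracted against $\lambda_1$ with $\langle x^m,\lambda^n\rangle=n!\delta_{mn}$. In $b_{\lambda_1}m(x)$ the $\lambda$-action is applied coefficientwise in $x$. In $[a_{\partial_{x_1}}b]\otimes m(x_1)n(x)|_{x_1=x}$: writing $[a_\lambda b]=\sum_j\lambda^jc_j$, this means $\sum_jc_j\otimes(\partial_x^jm)(x)\,n(x)$. $\Gamma_1$ denotes the kernel of $\partial$ on $\tilde\Gamma_1$ (here $\tilde\Gamma_1$ is the space of basic 1-chains, identified with $(A\otimes M[[x]])/(\partial\otimes1+1\otimes\partial_x)(A\otimes M[[x]])$ via $\phi\mapsto\sum_n\phi(\lambda^n)x^n/n!$). *)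

theory Defs
  imports "HOL-Computational_Algebra.Polynomial" "HOL-Library.Function_Algebras"
begin

text \<open>
  Scalars: a field 'k of characteristic 0.  Vector spaces are types with an explicit
  scalar multiplication (locale vector_space of HOL.Vector_Spaces).
  A lambda-bracket [a_lambda b] = sum_j lambda^j c_j is represented as a polynomial
  in lambda with coefficients in A (type 'a poly), coeff (lb a b) j = c_j.
  Likewise the action a_lambda m is a polynomial act a m with coefficients in M.
  Formal power series M[[x]] are functions nat => 'm (coefficient of x^n).
\<close>

definition lca_bilinear ::
  "('k::field \<Rightarrow> 'a::ab_group_add \<Rightarrow> 'a) \<Rightarrow> ('k \<Rightarrow> 'b::ab_group_add \<Rightarrow> 'b)
   \<Rightarrow> ('k \<Rightarrow> 'c::ab_group_add \<Rightarrow> 'c) \<Rightarrow> ('a \<Rightarrow> 'b \<Rightarrow> 'c poly) \<Rightarrow> bool" where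
  "lca_bilinear sA sB sC br \<longleftrightarrow>
     (\<forall>j b. Vector_Spaces.linear sA sC (\<lambda>a. coeff (br a b) j)) \<and>
     (\<forall>j a. Vector_Spaces.linear sB sC (\<lambda>b. coeff (br a b) j))"

text \<open>Sesquilinearity: [(da)_lambda b] = -lambda [a_lambda b],
  [a_lambda (db)] = (d + lambda)[a_lambda b].\<close>
definition sesquilinear ::
  "('a::ab_group_add \<Rightarrow> 'a) \<Rightarrow> ('b::ab_group_add \<Rightarrow> 'b) \<Rightarrow> ('a \<Rightarrow> 'b \<Rightarrow> 'b poly) \<Rightarrow> bool" where
  "sesquilinear dA dB br \<longleftrightarrow>
     (\<forall>a b j. coeff (br (dA a) b) j = (if j = 0 then 0 else - coeff (br a b) (j - 1))) \<and>
     (\<forall>a b j. coeff (br a (dB b)) j =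
                dB (coeff (br a b) j) + (if j = 0 then 0 else coeff (br a b) (j - 1)))"

text \<open>Skew-symmetry: [b_lambda a] = - [a_{-lambda-d} b].  Writing [a_mu b] = sum_j mu^j c_j,
  the coefficient of lambda^k in [a_{-lambda-d} b] is
  sum_{j >= k} (-1)^j (j choose k) d^(j-k) c_j.\<close>
definition skew_symmetric ::
  "('k::field \<Rightarrow> 'a::ab_group_add \<Rightarrow> 'a) \<Rightarrow> ('a \<Rightarrow> 'a) \<Rightarrow> ('a \<Rightarrow> 'a \<Rightarrow> 'a poly) \<Rightarrow> bool" where
  "skew_symmetric sA dA lb \<longleftrightarrow>
     (\<forall>a b k. coeff (lb b a) k =
        - (\<Sum>j\<in>{k..degree (lb a b)}.
             sA ((-1) ^ j * of_nat (j choose k)) ((dA ^^ (j - k)) (coeff (lb a b) j))))"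

text \<open>Jacobi identity (also the module axiom):
  [a_lambda [b_mu m]] - [b_mu [a_lambda m]] = [[a_lambda b]_{lambda+mu} m],
  compared coefficientwise at lambda^i mu^j.  The coefficient of lambda^i mu^j in
  sum_{k,l} lambda^k (lambda+mu)^l e_{kl} is sum_{k<=i} (i+j-k choose j) e_{k,i+j-k}.\<close>
definition jacobi_rule ::
  "('k::field \<Rightarrow> 'm::ab_group_add \<Rightarrow> 'm) \<Rightarrow> ('a::ab_group_add \<Rightarrow> 'a \<Rightarrow> 'a poly)
   \<Rightarrow> ('a \<Rightarrow> 'm \<Rightarrow> 'm poly) \<Rightarrow> bool" where
  "jacobi_rule sM lb act \<longleftrightarrow>
     (\<forall>a b m i j.
        coeff (act a (coeff (act b m) j)) i - coeff (act b (coeff (act a m) i)) j =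
        (\<Sum>k\<le>i. sM (of_nat ((i + j - k) choose j))
                    (coeff (act (coeff (lb a b) k) m) (i + j - k))))"

definition lie_conformal_algebra ::
  "('k::field \<Rightarrow> 'a::ab_group_add \<Rightarrow> 'a) \<Rightarrow> ('a \<Rightarrow> 'a) \<Rightarrow> ('a \<Rightarrow> 'a \<Rightarrow> 'a poly) \<Rightarrow> bool" where
  "lie_conformal_algebra sA dA lb \<longleftrightarrow>
     vector_space sA \<and> Vector_Spaces.linear sA sA dA \<and> lca_bilinear sA sA sA lb \<and>
     sesquilinear dA dA lb \<and> skew_symmetric sA dA lb \<and> jacobi_rule sA lb lb"

definition lca_module ::
  "('k::field \<Rightarrow> 'a::ab_group_add \<Rightarrow> 'a) \<Rightarrow> ('a \<Rightarrow> 'a) \<Rightarrow> ('a \<Rightarrow> 'a \<Rightarrow> 'a poly)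
   \<Rightarrow> ('k \<Rightarrow> 'm::ab_group_add \<Rightarrow> 'm) \<Rightarrow> ('m \<Rightarrow> 'm) \<Rightarrow> ('a \<Rightarrow> 'm \<Rightarrow> 'm poly) \<Rightarrow> bool" where
  "lca_module sA dA lb sM dM act \<longleftrightarrow>
     vector_space sM \<and> Vector_Spaces.linear sM sM dM \<and> lca_bilinear sA sM sM act \<and>
     sesquilinear dA dM act \<and> jacobi_rule sM lb act"

definition derivation_algebra ::
  "('k::field \<Rightarrow> 'm::ab_group_add \<Rightarrow> 'm) \<Rightarrow> ('m \<Rightarrow> 'm) \<Rightarrow> ('a \<Rightarrow> 'm \<Rightarrow> 'm poly)
   \<Rightarrow> ('m \<Rightarrow> 'm \<Rightarrow> 'm) \<Rightarrow> bool" where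
  "derivation_algebra sM dM act mu \<longleftrightarrow>
     (\<forall>n. Vector_Spaces.linear sM sM (\<lambda>m. mu m n)) \<and>
     (\<forall>m. Vector_Spaces.linear sM sM (\<lambda>n. mu m n)) \<and>
     (\<forall>m n. mu m n = mu n m) \<and>
     (\<forall>m n p. mu (mu m n) p = mu m (mu n p)) \<and>
     (\<forall>m n. dM (mu m n) = mu (dM m) n + mu m (dM n)) \<and>
     (\<forall>a m n j. coeff (act a (mu m n)) j =
                  mu (coeff (act a m) j) n + mu m (coeff (act a n) j))"

definition ser_scale :: "('k \<Rightarrow> 'm \<Rightarrow> 'm) \<Rightarrow> 'k \<Rightarrow> (nat \<Rightarrow> 'm) \<Rightarrow> (nat \<Rightarrow> 'm)" where
  "ser_scale sM c f = (\<lambda>n. sM c (f n))"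

definition ser_dx :: "('k::field \<Rightarrow> 'm \<Rightarrow> 'm) \<Rightarrow> (nat \<Rightarrow> 'm) \<Rightarrow> (nat \<Rightarrow> 'm)" where
  "ser_dx sM f = (\<lambda>n. sM (of_nat (Suc n)) (f (Suc n)))"

definition ser_map :: "('m \<Rightarrow> 'm) \<Rightarrow> (nat \<Rightarrow> 'm) \<Rightarrow> (nat \<Rightarrow> 'm)" where
  "ser_map d f = (\<lambda>n. d (f n))"

definition ser_mult :: "('m::comm_monoid_add \<Rightarrow> 'm \<Rightarrow> 'm) \<Rightarrow> (nat \<Rightarrow> 'm) \<Rightarrow> (nat \<Rightarrow> 'm) \<Rightarrow> (nat \<Rightarrow> 'm)" where
  "ser_mult mu f g = (\<lambda>k. \<Sum>i\<le>k. mu (f i) (g (k - i)))"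

text \<open>The pairing  < n(x_1), b_{lambda_1} m(x) >  with <x^p, lambda^q> = q! delta_{pq};
  b_lambda m(x) is taken coefficientwise in x, so the coefficient of x^k of the result is
  sum_p p! n_p (b_(p) m_k).\<close>
definition pair_act ::
  "('k::field \<Rightarrow> 'm::ab_group_add \<Rightarrow> 'm) \<Rightarrow> ('a \<Rightarrow> 'm \<Rightarrow> 'm poly) \<Rightarrow> ('m \<Rightarrow> 'm \<Rightarrow> 'm)
   \<Rightarrow> (nat \<Rightarrow> 'm) \<Rightarrow> 'a \<Rightarrow> (nat \<Rightarrow> 'm) \<Rightarrow> (nat \<Rightarrow> 'm)" where
  "pair_act sM act mu n b m =
     (\<lambda>k. \<Sum>p\<le>degree (act b (m k)). sM (of_nat (fact p)) (mu (n p) (coeff (act b (m k)) p)))"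

text \<open>tens : A x B -> T is (the structure map of) a tensor product A (x) B over the field:
  it is bilinear, its image spans T, and whenever sum_{a in S} a (x) g(a) = 0 for a
  finite linearly independent S, all g(a) = 0.  This characterises the algebraic tensor
  product up to unique isomorphism.\<close>
definition tensor_product ::
  "('k::field \<Rightarrow> 'a::ab_group_add \<Rightarrow> 'a) \<Rightarrow> ('k \<Rightarrow> 'b::ab_group_add \<Rightarrow> 'b)
   \<Rightarrow> ('k \<Rightarrow> 't::ab_group_add \<Rightarrow> 't) \<Rightarrow> ('a \<Rightarrow> 'b \<Rightarrow> 't) \<Rightarrow> bool" where
  "tensor_product sA sB sT tens \<longleftrightarrow>
     (\<forall>b. Vector_Spaces.linear sA sT (\<lambda>a. tens a b)) \<and>
     (\<forall>a. Vector_Spaces.linear sB sT (\<lambda>b. tens a b)) \<and>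
     module.span sT (range (\<lambda>(a, b). tens a b)) = UNIV \<and>
     (\<forall>S g. finite S \<longrightarrow> \<not> module.dependent sA S \<longrightarrow>
        (\<Sum>a\<in>S. tens a (g a)) = 0 \<longrightarrow> (\<forall>a\<in>S. g a = 0))"

definition bilinear_map ::
  "('k::field \<Rightarrow> 't::ab_group_add \<Rightarrow> 't) \<Rightarrow> ('t \<Rightarrow> 't \<Rightarrow> 't) \<Rightarrow> bool" where
  "bilinear_map sT br \<longleftrightarrow>
     (\<forall>v. Vector_Spaces.linear sT sT (\<lambda>u. br u v)) \<and> (\<forall>u. Vector_Spaces.linear sT sT (\<lambda>v. br u v))"

definition chain_bracket_pure ::
  "('k::field \<Rightarrow> 'm::ab_group_add \<Rightarrow> 'm) \<Rightarrow> ('a::ab_group_add \<Rightarrow> 'a \<Rightarrow> 'a poly)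
   \<Rightarrow> ('a \<Rightarrow> 'm \<Rightarrow> 'm poly) \<Rightarrow> ('m \<Rightarrow> 'm \<Rightarrow> 'm) \<Rightarrow> ('a \<Rightarrow> (nat \<Rightarrow> 'm) \<Rightarrow> 't::ab_group_add)
   \<Rightarrow> 'a \<Rightarrow> (nat \<Rightarrow> 'm) \<Rightarrow> 'a \<Rightarrow> (nat \<Rightarrow> 'm) \<Rightarrow> 't" where
  "chain_bracket_pure sM lb act mu tens a m b n =
     (\<Sum>j\<le>degree (lb a b). tens (coeff (lb a b) j) (ser_mult mu ((ser_dx sM ^^ j) m) n))
     - tens a (pair_act sM act mu n b m)
     + tens b (pair_act sM act mu m a n)"

end

theory Submission
  imports Defs
begin

text \<open>Write T = A \<otimes> M[[x]] and D_x = \<partial> \<otimes> 1 + 1 \<otimes> \<partial>_x.  The bracket splits as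
  [u, v] = C(u, v) + R_u v - R_v u, where C(a \<otimes> m, b \<otimes> n) = [a_{\<partial>_{x_1}} b] \<otimes> m(x_1) n(x)|_{x_1=x}
  is the current part and R_u = 1 \<otimes> X_u, where X_{a \<otimes> m} f = \<langle>m(x_1), a_{\<lambda>_1} f\<rangle> is a
  derivation of M.

  The Jacobi identity of A gives the left Leibniz rule C(u, C(v, w)) = C(v, C(u, w)) + C(C(u, v), w)
  on the nose, and skew-symmetry of A, after integrating by parts in x, gives
  C(u, v) + C(v, u) \<in> im D_x.  The Jacobi identity of the module makes u \<mapsto> X_u a Lie
  homomorphism into the derivations of M, so R is a representation by derivations of C.
  Sesquilinearity gives C(D_x u, v) = 0, C(u, D_x v) = D_x C(u, v), X_{D_x u} = 0 and
  R_u D_x = D_x R_u, so im D_x is an ideal, and the Lie algebra identities hold modulo it.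
  Since \<partial>^M is a derivation of the product compatible with the action, D_M = \<partial> \<otimes> 1 + 1 \<otimes> \<partial>^M
  is a derivation of C and of R; it commutes with D_x, and the induced operator of the theorem is
  D_M - D_x.\<close>

section \<open>Linear maps and finite sums\<close>

lemma linear_intro:
  "vector_space s1 \<Longrightarrow> vector_space s2 \<Longrightarrow> (\<And>x y. f (x + y) = f x + f y) \<Longrightarrow>
   (\<And>c x. f (s1 c x) = s2 c (f x)) \<Longrightarrow> Vector_Spaces.linear s1 s2 f"
  by (simp add: Vector_Spaces.linear_iff)

lemma
  assumes "Vector_Spaces.linear s1 s2 f"
  shows lin_add: "f (x + y) = f x + f y"
    and lin_scale: "f (s1 c x) = s2 c (f x)"
    and lin_zero: "f 0 = 0"
    and lin_neg: "f (- x) = - f x"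
    and lin_diff: "f (x - y) = f x - f y"
    and lin_sum: "f (sum g S) = (\<Sum>i\<in>S. f (g i))"
    and lin_domain: "vector_space s1"
    and lin_codomain: "vector_space s2"
proof -
  interpret Vector_Spaces.linear s1 s2 f using assms by (simp add: Vector_Spaces.linear_def)
  show "f (x + y) = f x + f y" "f (s1 c x) = s2 c (f x)" "f 0 = 0" "f (- x) = - f x"
    "f (x - y) = f x - f y" "f (sum g S) = (\<Sum>i\<in>S. f (g i))"
    by (simp_all add: add scale zero neg diff sum)
  show "vector_space s1" "vector_space s2" by unfold_locales
qed

lemma linear_comp:
  "Vector_Spaces.linear s1 s2 f \<Longrightarrow> Vector_Spaces.linear s2 s3 g \<Longrightarrow>
   Vector_Spaces.linear s1 s3 (\<lambda>x. g (f x))"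
  using Vector_Spaces.linear_compose[of s1 s2 f s3 g] by (simp add: comp_def)

lemma linear_zero_fun:
  "vector_space s1 \<Longrightarrow> vector_space s2 \<Longrightarrow> Vector_Spaces.linear s1 s2 (\<lambda>x. 0)"
proof (rule linear_intro)
  assume "vector_space s2"
  then interpret vector_space s2 .
  show "0 = s2 c 0" for c by simp
qed simp_all

lemma linear_sum_fun:
  assumes "\<And>i. i \<in> I \<Longrightarrow> Vector_Spaces.linear s1 s2 (f i)" "vector_space s1" "vector_space s2"
  shows "Vector_Spaces.linear s1 s2 (\<lambda>x. \<Sum>i\<in>I. f i x)"
proof (rule linear_intro[OF assms(2,3)])
  interpret vector_space s2 by fact
  show "(\<Sum>i\<in>I. f i (x + y)) = (\<Sum>i\<in>I. f i x) + (\<Sum>i\<in>I. f i y)" for x y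
    by (simp add: lin_add[OF assms(1)] sum.distrib)
  show "(\<Sum>i\<in>I. f i (s1 c x)) = s2 c (\<Sum>i\<in>I. f i x)" for c x
    by (simp add: lin_scale[OF assms(1)] scale_sum_right)
qed

lemma linear_add_fun:
  assumes f: "Vector_Spaces.linear s1 s2 f" and g: "Vector_Spaces.linear s1 s2 g"
  shows "Vector_Spaces.linear s1 s2 (\<lambda>x. f x + g x)"
proof (rule linear_intro[OF lin_domain[OF f] lin_codomain[OF f]])
  interpret vector_space s2 using f by (rule lin_codomain)
  show "f (x + y) + g (x + y) = f x + g x + (f y + g y)" for x y
    by (simp add: lin_add[OF f] lin_add[OF g])
  show "f (s1 c x) + g (s1 c x) = s2 c (f x + g x)" for c x
    by (simp add: lin_scale[OF f] lin_scale[OF g] scale_right_distrib)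
qed

lemma linear_diff_fun:
  assumes f: "Vector_Spaces.linear s1 s2 f" and g: "Vector_Spaces.linear s1 s2 g"
  shows "Vector_Spaces.linear s1 s2 (\<lambda>x. f x - g x)"
proof (rule linear_intro[OF lin_domain[OF f] lin_codomain[OF f]])
  interpret vector_space s2 using f by (rule lin_codomain)
  show "f (x + y) - g (x + y) = f x - g x + (f y - g y)" for x y
    by (simp add: lin_add[OF f] lin_add[OF g])
  show "f (s1 c x) - g (s1 c x) = s2 c (f x - g x)" for c x
    by (simp add: lin_scale[OF f] lin_scale[OF g] scale_right_diff_distrib)
qed

lemma sum_coeff_atMost_degree:
  assumes "\<And>j. g 0 j = 0" "degree p \<le> N"
  shows "(\<Sum>j\<le>N. g (coeff p j) j) = (\<Sum>j\<le>degree p. g (coeff p j) j)"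
  by (rule sum.mono_neutral_right) (auto simp: assms coeff_eq_0)

lemma linear_eventually_eq:
  fixes g :: "nat \<Rightarrow> 'b::ab_group_add \<Rightarrow> 'c::ab_group_add"
  assumes ev: "\<And>x. \<exists>N0. \<forall>N\<ge>N0. f x = g N x" and lin: "\<And>N. Vector_Spaces.linear s1 s2 (g N)"
  shows "Vector_Spaces.linear s1 s2 f"
proof (rule linear_intro[OF lin_domain[OF lin] lin_codomain[OF lin]])
  have common: "\<exists>N. f x = g N x \<and> f y = g N y \<and> f z = g N z" for x y z
  proof -
    obtain N1 N2 N3 where "\<forall>N\<ge>N1. f x = g N x" "\<forall>N\<ge>N2. f y = g N y" "\<forall>N\<ge>N3. f z = g N z"
      using ev by metis
    then show ?thesis by (intro exI[of _ "max N1 (max N2 N3)"]) (meson max.cobounded1 max.cobounded2 order.trans)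
  qed
  show "f (x + y) = f x + f y" for x y
    using common[of x y "x + y"] lin_add[OF lin] by metis
  show "f (s1 c x) = s2 c (f x)" for c x
    using common[of x x "s1 c x"] lin_scale[OF lin] by metis
qed

lemma sum_nested3:
  assumes "finite A" "\<And>x. finite (B x)" "\<And>x y. finite (C x y)"
  shows "(\<Sum>x\<in>A. \<Sum>y\<in>B x. \<Sum>z\<in>C x y. g x y z) =
         (\<Sum>(x, y, z)\<in>{(x, y, z). x \<in> A \<and> y \<in> B x \<and> z \<in> C x y}. g x y z)"
proof -
  have "(\<Sum>x\<in>A. \<Sum>y\<in>B x. \<Sum>z\<in>C x y. g x y z) = (\<Sum>x\<in>A. \<Sum>(y, z)\<in>Sigma (B x) (C x). g x y z)"
    by (rule sum.cong[OF refl]) (rule sum.Sigma, auto simp: assms)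
  also have "\<dots> = (\<Sum>(x, yz)\<in>Sigma A (\<lambda>x. Sigma (B x) (C x)). case yz of (y, z) \<Rightarrow> g x y z)"
    by (rule sum.Sigma) (auto simp: assms)
  also have "Sigma A (\<lambda>x. Sigma (B x) (C x)) = {(x, y, z). x \<in> A \<and> y \<in> B x \<and> z \<in> C x y}" by auto
  finally show ?thesis by (simp add: case_prod_beta')
qed

lemma sum_bij_betw_support:
  assumes "finite S" "finite T" "S' \<subseteq> S" "T' \<subseteq> T"
    and "\<And>x. x \<in> S - S' \<Longrightarrow> f x = 0" "\<And>y. y \<in> T - T' \<Longrightarrow> g y = 0"
    and "bij_betw h S' T'" "\<And>x. x \<in> S' \<Longrightarrow> g (h x) = f x"
  shows "sum f S = sum g T"
proof -
  have "sum f S = sum f S'" by (rule sum.mono_neutral_right) (use assms in auto)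
  also have "\<dots> = sum g T'" using sum.reindex_bij_betw[OF assms(7), of g] assms(8) by simp
  also have "\<dots> = sum g T" by (rule sum.mono_neutral_left) (use assms in auto)
  finally show ?thesis .
qed

lemma sum_swap_triangle:
  assumes "(d::nat) \<le> K"
  shows "(\<Sum>k\<le>K. \<Sum>j\<in>{k..d}. H j k) = (\<Sum>j\<le>d. \<Sum>k\<le>j. H j k)"
proof -
  have "(\<Sum>k\<le>K. \<Sum>j\<in>{k..d}. H j k) = (\<Sum>(k, j)\<in>Sigma {..K} (\<lambda>k. {k..d}). H j k)"
    by (rule sum.Sigma) auto
  also have "\<dots> = (\<Sum>(j, k)\<in>Sigma {..d} (\<lambda>j. {..j}). H j k)"
    by (rule sum.reindex_bij_witness[where i="\<lambda>(j, k). (k, j)" and j="\<lambda>(k, j). (j, k)"]) (use assms in auto)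
  also have "\<dots> = (\<Sum>j\<le>d. \<Sum>k\<le>j. H j k)"
    by (rule sum.Sigma[symmetric]) auto
  finally show ?thesis .
qed

lemma linear_subspace_preimage:
  assumes "Vector_Spaces.linear s1 s2 f" and "module.subspace s2 S"
  shows "module.subspace s1 {x. f x \<in> S}"
proof -
  interpret vector_space_pair s1 s2
    using assms(1) by (simp add: vector_space_pair_def lin_domain lin_codomain)
  show ?thesis using linear_subspace_vimage[OF assms] by (simp add: vimage_def)
qed

lemma minus_one_power_diff_mult:
  assumes "k \<le> j"
  shows "((-1) ^ j * x * (-1) ^ (j - k) :: 'a::comm_ring_1) = (-1) ^ k * x"
proof -
  have "((-1) ^ j :: 'a) = (-1) ^ k * (-1) ^ (j - k)" using assms by (simp flip: power_add)
  then have "(-1) ^ j * x * (-1) ^ (j - k) = (-1) ^ k * x * ((-1) ^ (j - k) * (-1) ^ (j - k) :: 'a)"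
    by (simp add: ac_simps)
  also have "((-1) ^ (j - k) * (-1) ^ (j - k) :: 'a) = 1" by (simp flip: power_mult_distrib)
  finally show ?thesis by simp
qed

lemma linear_scale_self: "vector_space s \<Longrightarrow> Vector_Spaces.linear s s (s c)"
proof (rule linear_intro)
  assume "vector_space s"
  then interpret vector_space s .
  show "s c (x + y) = s c x + s c y" "s c (s d x) = s d (s c x)" for x y d
    by (simp_all add: scale_right_distrib scale_left_commute)
qed

lemma linear_range_subspace:
  assumes "Vector_Spaces.linear s1 s2 f"
  shows "module.subspace s2 (range f)"
proof -
  interpret vector_space_pair s1 s2
    using assms by (simp add: vector_space_pair_def lin_domain lin_codomain)
  show ?thesis using linear_subspace_image[OF assms vs1.subspace_UNIV] .
qed


section \<open>Algebraic tensor products\<close>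

locale tensor_prod =
  fixes sA :: "'k::field \<Rightarrow> 'a::ab_group_add \<Rightarrow> 'a"
    and sB :: "'k \<Rightarrow> 'b::ab_group_add \<Rightarrow> 'b"
    and sT :: "'k \<Rightarrow> 't::ab_group_add \<Rightarrow> 't"
    and tens :: "'a \<Rightarrow> 'b \<Rightarrow> 't"
  assumes tensor_product: "tensor_product sA sB sT tens"
begin

lemma tens_linear_left: "Vector_Spaces.linear sA sT (\<lambda>a. tens a b)"
  using tensor_product by (simp add: tensor_product_def)

lemma tens_linear_right: "Vector_Spaces.linear sB sT (\<lambda>b. tens a b)"
  using tensor_product by (simp add: tensor_product_def)

lemma tens_span: "module.span sT (range (\<lambda>(a, b). tens a b)) = UNIV"
  using tensor_product by (simp add: tensor_product_def)

lemma tens_independent: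
  "finite S \<Longrightarrow> \<not> module.dependent sA S \<Longrightarrow> (\<Sum>a\<in>S. tens a (g a)) = 0 \<Longrightarrow> a \<in> S \<Longrightarrow> g a = 0"
  using tensor_product unfolding tensor_product_def by blast

sublocale A: vector_space sA by (rule lin_domain[OF tens_linear_left])
sublocale B: vector_space sB by (rule lin_domain[OF tens_linear_right])
sublocale T: vector_space sT by (rule lin_codomain[OF tens_linear_left])

lemma tens_add_left: "tens (a + a') b = tens a b + tens a' b" using lin_add[OF tens_linear_left] .
lemma tens_add_right: "tens a (b + b') = tens a b + tens a b'" using lin_add[OF tens_linear_right] .
lemma tens_zero_left [simp]: "tens 0 b = 0" using lin_zero[OF tens_linear_left] .
lemma tens_zero_right [simp]: "tens a 0 = 0" using lin_zero[OF tens_linear_right] .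
lemma tens_minus_left: "tens (- a) b = - tens a b" using lin_neg[OF tens_linear_left] .
lemma tens_minus_right: "tens a (- b) = - tens a b" using lin_neg[OF tens_linear_right] .
lemma tens_diff_left: "tens (a - a') b = tens a b - tens a' b" using lin_diff[OF tens_linear_left] .
lemma tens_diff_right: "tens a (b - b') = tens a b - tens a b'" using lin_diff[OF tens_linear_right] .
lemma tens_sum_left: "tens (sum g S) b = (\<Sum>x\<in>S. tens (g x) b)" using lin_sum[OF tens_linear_left] .
lemma tens_sum_right: "tens a (sum g S) = (\<Sum>x\<in>S. tens a (g x))" using lin_sum[OF tens_linear_right] .
lemma tens_scale_left: "tens (sA c a) b = sT c (tens a b)" using lin_scale[OF tens_linear_left] .
lemma tens_scale_right: "tens a (sB c b) = sT c (tens a b)" using lin_scale[OF tens_linear_right] .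

lemma tensor_induct:
  assumes "T.subspace {t. P t}" and "\<And>a b. P (tens a b)"
  shows "P t"
proof -
  have "t \<in> T.span (range (\<lambda>(a, b). tens a b))" using tens_span by simp
  then show ?thesis by (rule T.span_induct) (use assms in auto)
qed

lemma tensor_linear_ext:
  assumes F: "Vector_Spaces.linear sT sC F" and G: "Vector_Spaces.linear sT sC G"
    and eq: "\<And>a b. F (tens a b) = G (tens a b)"
  shows "F t = G t"
proof -
  interpret vector_space_pair sT sC
    using F by (simp add: vector_space_pair_def lin_domain lin_codomain)
  show ?thesis
    by (rule linear_eq_on[OF F G, of t "range (\<lambda>(a, b). tens a b)"]) (auto simp: tens_span eq)
qed

lemma tensor_bilinear_ext:
  assumes "\<And>v. Vector_Spaces.linear sT sC (\<lambda>u. F u v)" "\<And>u. Vector_Spaces.linear sT sC (F u)"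
    "\<And>v. Vector_Spaces.linear sT sC (\<lambda>u. G u v)" "\<And>u. Vector_Spaces.linear sT sC (G u)"
    "\<And>a b a' b'. F (tens a b) (tens a' b') = G (tens a b) (tens a' b')"
  shows "F u v = G u v"
proof -
  have "F (tens a b) v = G (tens a b) v" for a b
    by (rule tensor_linear_ext[OF assms(2) assms(4)]) (rule assms(5))
  then show ?thesis
    by (rule tensor_linear_ext[where F="\<lambda>u. F u v" and G="\<lambda>u. G u v", OF assms(1) assms(3)])
qed

lemma tens_basis_inj:
  assumes BA: "\<not> A.dependent BA" and BB: "\<not> B.dependent BB"
    and a: "a \<in> BA" "a' \<in> BA" and b: "b \<in> BB" "b' \<in> BB" and eq: "tens a b = tens a' b'"
  shows "a = a' \<and> b = b'"
proof (cases "a = a'")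
  case True
  have "a \<noteq> 0" using BA a(1) A.dependent_zero by blast
  have "(\<Sum>x\<in>{a}. tens x ((\<lambda>_. b - b') x)) = 0" using eq True by (simp add: tens_diff_right)
  then have "b - b' = 0"
    using tens_independent[of "{a}" "\<lambda>_. b - b'" a] A.independent_mono[OF BA] a \<open>a \<noteq> 0\<close>
    by auto
  then show ?thesis using True by simp
next
  case False
  have "b \<noteq> 0" using BB b(1) B.dependent_zero by blast
  let ?g = "\<lambda>x. if x = a then b else - b'"
  have "(\<Sum>x\<in>{a, a'}. tens x (?g x)) = 0" using eq False by (simp add: tens_minus_right)
  then have "?g a = 0"
    using tens_independent[of "{a, a'}" ?g a] A.independent_mono[OF BA] a by auto
  with \<open>b \<noteq> 0\<close> show ?thesis by simp
qed

lemma tens_basis_independent: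
  assumes BA: "\<not> A.dependent BA" and BB: "\<not> B.dependent BB"
  shows "\<not> T.dependent ((\<lambda>(a, b). tens a b) ` (BA \<times> BB))"
  unfolding T.independent_explicit_module
proof (intro allI impI)
  let ?p = "\<lambda>(a, b). tens a b"
  fix t u v
  assume t: "finite t" "t \<subseteq> ?p ` (BA \<times> BB)" and s: "(\<Sum>v\<in>t. sT (u v) v) = 0" and v: "v \<in> t"
  define Q where "Q = (BA \<times> BB) \<inter> ?p -` t"
  have tQ: "t = ?p ` Q" using t(2) unfolding Q_def by blast
  have injQ: "inj_on ?p Q"
    using tens_basis_inj[OF BA BB] by (auto simp: inj_on_def Q_def)
  have fQ: "finite Q" using t(1) tQ injQ finite_image_iff by metis
  have fin2: "finite {b. (a, b) \<in> Q}" for a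
    by (rule finite_subset[OF _ finite_imageI[OF fQ, of snd]]) force
  define G where "G a = (\<Sum>b\<in>{b. (a, b) \<in> Q}. sB (u (tens a b)) b)" for a
  have "(\<Sum>v\<in>t. sT (u v) v) = (\<Sum>q\<in>Q. tens (fst q) (sB (u (?p q)) (snd q)))"
    unfolding tQ sum.reindex[OF injQ] by (auto simp: tens_scale_right intro!: sum.cong)
  also have "\<dots> = (\<Sum>a\<in>fst ` Q. \<Sum>q\<in>{q\<in>Q. fst q = a}. tens (fst q) (sB (u (?p q)) (snd q)))"
    by (rule sum.image_gen[OF fQ])
  also have "\<dots> = (\<Sum>a\<in>fst ` Q. tens a (G a))"
  proof (rule sum.cong[OF refl])
    fix a
    have "(\<Sum>q\<in>{q\<in>Q. fst q = a}. tens (fst q) (sB (u (?p q)) (snd q))) =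
          (\<Sum>b\<in>{b. (a, b) \<in> Q}. tens a (sB (u (tens a b)) b))"
      by (rule sum.reindex_bij_witness[where i="\<lambda>b. (a, b)" and j=snd]) auto
    then show "(\<Sum>q\<in>{q\<in>Q. fst q = a}. tens (fst q) (sB (u (?p q)) (snd q))) = tens a (G a)"
      by (simp add: G_def tens_sum_right)
  qed
  finally have sum0: "(\<Sum>a\<in>fst ` Q. tens a (G a)) = 0" using s by simp
  from v tQ obtain a b where ab: "(a, b) \<in> Q" "v = tens a b" by auto
  have "A.independent (fst ` Q)" by (rule A.independent_mono[OF BA]) (auto simp: Q_def)
  then have "G a = 0" using tens_independent[OF _ _ sum0] fQ ab(1) by force
  then show "u v = 0"
    using B.independentD[OF BB fin2[of a], of "\<lambda>b. u (tens a b)" b] ab by (auto simp: G_def Q_def)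
qed

text \<open>The universal property, proved by extending a bijection between products of bases.\<close>

lemma tensor_lift_exists:
  assumes l1: "\<And>b. Vector_Spaces.linear sA sC (\<lambda>a. \<phi> a b)"
    and l2: "\<And>a. Vector_Spaces.linear sB sC (\<phi> a)"
  shows "\<exists>F. Vector_Spaces.linear sT sC F \<and> (\<forall>a b. F (tens a b) = \<phi> a b)"
proof -
  have vsC: "vector_space sC" using l1 by (rule lin_codomain)
  interpret TC: vector_space_pair sT sC using vsC by (simp add: vector_space_pair_def T.vector_space_axioms)
  interpret AC: vector_space_pair sA sC using vsC by (simp add: vector_space_pair_def A.vector_space_axioms)
  interpret BC: vector_space_pair sB sC using vsC by (simp add: vector_space_pair_def B.vector_space_axioms)
  obtain BA where BA: "\<not> A.dependent BA" "UNIV \<subseteq> A.span BA"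
    using A.maximal_independent_subset[of UNIV] by blast
  obtain BB where BB: "\<not> B.dependent BB" "UNIV \<subseteq> B.span BB"
    using B.maximal_independent_subset[of UNIV] by blast
  let ?p = "\<lambda>(a, b). tens a b"
  have inj: "inj_on ?p (BA \<times> BB)"
    using tens_basis_inj[OF BA(1) BB(1)] by (auto simp: inj_on_def)
  define F where "F = TC.construct (?p ` (BA \<times> BB)) (\<lambda>t. case_prod \<phi> (inv_into (BA \<times> BB) ?p t))"
  have linF: "Vector_Spaces.linear sT sC F"
    unfolding F_def by (rule TC.linear_construct[OF tens_basis_independent[OF BA(1) BB(1)]])
  have on_basis: "F (tens a b) = \<phi> a b" if "a \<in> BA" "b \<in> BB" for a b
    unfolding F_def using that inv_into_f_f[OF inj, of "(a, b)"]
    by (subst TC.construct_basis[OF tens_basis_independent[OF BA(1) BB(1)]]) auto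
  have on_BB: "F (tens a b) = \<phi> a b" if "b \<in> BB" for a b
    by (rule AC.linear_eq_on[OF linear_comp[OF tens_linear_left linF] l1, where B=BA])
       (use BA on_basis that in auto)
  have "F (tens a b) = \<phi> a b" for a b
    by (rule BC.linear_eq_on[OF linear_comp[OF tens_linear_right linF] l2, where B=BB])
       (use BB on_BB in auto)
  with linF show ?thesis by blast
qed

definition tensor_lift :: "('k \<Rightarrow> 'c::ab_group_add \<Rightarrow> 'c) \<Rightarrow> ('a \<Rightarrow> 'b \<Rightarrow> 'c) \<Rightarrow> 't \<Rightarrow> 'c" where
  "tensor_lift sC \<phi> = (SOME F. Vector_Spaces.linear sT sC F \<and> (\<forall>a b. F (tens a b) = \<phi> a b))"

lemma
  assumes "\<And>b. Vector_Spaces.linear sA sC (\<lambda>a. \<phi> a b)" "\<And>a. Vector_Spaces.linear sB sC (\<phi> a)"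
  shows tensor_lift_linear: "Vector_Spaces.linear sT sC (tensor_lift sC \<phi>)"
    and tensor_lift_tens: "tensor_lift sC \<phi> (tens a b) = \<phi> a b"
  using someI_ex[OF tensor_lift_exists[OF assms]] unfolding tensor_lift_def by blast+

lemma tensor_lift_linear_param:
  assumes \<phi>1: "\<And>x b. Vector_Spaces.linear sA sC (\<lambda>a. \<phi> x a b)"
    and \<phi>2: "\<And>x a. Vector_Spaces.linear sB sC (\<phi> x a)"
    and \<phi>0: "\<And>a b. Vector_Spaces.linear s0 sC (\<lambda>x. \<phi> x a b)"
  shows "Vector_Spaces.linear s0 sC (\<lambda>x. tensor_lift sC (\<phi> x) t)"
proof (rule linear_intro[OF lin_domain[OF \<phi>0] lin_codomain[OF \<phi>0]])
  note F = tensor_lift_linear[OF \<phi>1 \<phi>2] and F_tens = tensor_lift_tens[OF \<phi>1 \<phi>2]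
  show "tensor_lift sC (\<phi> (x + y)) t = tensor_lift sC (\<phi> x) t + tensor_lift sC (\<phi> y) t" for x y
    by (rule tensor_linear_ext[OF F linear_add_fun[OF F F]]) (simp add: F_tens lin_add[OF \<phi>0])
  show "tensor_lift sC (\<phi> (s0 c x)) t = sC c (tensor_lift sC (\<phi> x) t)" for c x
    by (rule tensor_linear_ext[OF F linear_comp[OF F linear_scale_self[OF lin_codomain[OF \<phi>0]]]])
       (simp add: F_tens lin_scale[OF \<phi>0])
qed

definition tensor_lift2 ::
  "('k \<Rightarrow> 'c::ab_group_add \<Rightarrow> 'c) \<Rightarrow> ('a \<Rightarrow> 'b \<Rightarrow> 'a \<Rightarrow> 'b \<Rightarrow> 'c) \<Rightarrow> 't \<Rightarrow> 't \<Rightarrow> 'c" where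
  "tensor_lift2 sC \<psi> u = tensor_lift sC (\<lambda>a' b'. tensor_lift sC (\<lambda>a b. \<psi> a b a' b') u)"

context
  fixes sC :: "'k \<Rightarrow> 'c::ab_group_add \<Rightarrow> 'c" and \<psi> :: "'a \<Rightarrow> 'b \<Rightarrow> 'a \<Rightarrow> 'b \<Rightarrow> 'c"
  assumes \<psi>1: "\<And>b a' b'. Vector_Spaces.linear sA sC (\<lambda>a. \<psi> a b a' b')"
    and \<psi>2: "\<And>a a' b'. Vector_Spaces.linear sB sC (\<lambda>b. \<psi> a b a' b')"
    and \<psi>3: "\<And>a b b'. Vector_Spaces.linear sA sC (\<lambda>a'. \<psi> a b a' b')"
    and \<psi>4: "\<And>a b a'. Vector_Spaces.linear sB sC (\<lambda>b'. \<psi> a b a' b')"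
begin

private lemma inner_linear:
  "Vector_Spaces.linear sA sC (\<lambda>a'. tensor_lift sC (\<lambda>a b. \<psi> a b a' b') u)"
  "Vector_Spaces.linear sB sC (\<lambda>b'. tensor_lift sC (\<lambda>a b. \<psi> a b a' b') u)"
  "Vector_Spaces.linear sT sC (tensor_lift sC (\<lambda>a b. \<psi> a b a' b'))"
  by (rule tensor_lift_linear_param tensor_lift_linear; fact \<psi>1 \<psi>2 \<psi>3 \<psi>4)+

lemma tensor_lift2_linear_right: "Vector_Spaces.linear sT sC (tensor_lift2 sC \<psi> u)"
  unfolding tensor_lift2_def by (rule tensor_lift_linear; fact inner_linear)

lemma tensor_lift2_linear_left: "Vector_Spaces.linear sT sC (\<lambda>u. tensor_lift2 sC \<psi> u v)"
  unfolding tensor_lift2_def by (rule tensor_lift_linear_param; fact inner_linear)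

lemma tensor_lift2_tens: "tensor_lift2 sC \<psi> (tens a b) (tens a' b') = \<psi> a b a' b'"
proof -
  have "tensor_lift2 sC \<psi> (tens a b) (tens a' b') = tensor_lift sC (\<lambda>a b. \<psi> a b a' b') (tens a b)"
    unfolding tensor_lift2_def by (rule tensor_lift_tens[OF inner_linear(1,2)])
  also have "\<dots> = \<psi> a b a' b'" by (rule tensor_lift_tens[OF \<psi>1 \<psi>2])
  finally show ?thesis .
qed

end

end


section \<open>Formal power series over a commutative algebra\<close>

locale series_product =
  fixes sM :: "'k::field_char_0 \<Rightarrow> 'm::ab_group_add \<Rightarrow> 'm"
    and mu :: "'m \<Rightarrow> 'm \<Rightarrow> 'm"
  assumes mu_linear_left: "Vector_Spaces.linear sM sM (\<lambda>m. mu m n)"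
    and mu_linear_right: "Vector_Spaces.linear sM sM (mu m)"
    and mu_commute: "mu m n = mu n m"
    and mu_assoc: "mu (mu m n) p = mu m (mu n p)"
begin

sublocale M: vector_space sM by (rule lin_domain[OF mu_linear_left])

sublocale S: vector_space "ser_scale sM"
  by unfold_locales
     (simp_all add: ser_scale_def fun_eq_iff M.scale_right_distrib M.scale_left_distrib)

lemma mu_add_left: "mu (x + y) z = mu x z + mu y z" using lin_add[OF mu_linear_left] .
lemma mu_add_right: "mu z (x + y) = mu z x + mu z y" using lin_add[OF mu_linear_right] .
lemma mu_scale_left: "mu (sM c x) z = sM c (mu x z)" using lin_scale[OF mu_linear_left] .
lemma mu_scale_right: "mu z (sM c x) = sM c (mu z x)" using lin_scale[OF mu_linear_right] .
lemma mu_zero_right [simp]: "mu z 0 = 0" using lin_zero[OF mu_linear_right] .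
lemma mu_minus_right: "mu z (- x) = - mu z x" using lin_neg[OF mu_linear_right] .
lemma mu_diff_right: "mu z (x - y) = mu z x - mu z y" using lin_diff[OF mu_linear_right] .
lemma mu_sum_left: "mu (sum f A) z = (\<Sum>x\<in>A. mu (f x) z)" using lin_sum[OF mu_linear_left] .
lemma mu_sum_right: "mu z (sum f A) = (\<Sum>x\<in>A. mu z (f x))" using lin_sum[OF mu_linear_right] .

lemma ser_dx_scale: "ser_dx sM (ser_scale sM c f) = ser_scale sM c (ser_dx sM f)"
  by (simp add: ser_dx_def ser_scale_def fun_eq_iff M.scale_left_commute)

lemma ser_dx_linear: "Vector_Spaces.linear (ser_scale sM) (ser_scale sM) (ser_dx sM)"
proof (rule linear_intro[OF S.vector_space_axioms S.vector_space_axioms])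
  show "ser_dx sM (f + g) = ser_dx sM f + ser_dx sM g" for f g
    by (simp add: ser_dx_def fun_eq_iff M.scale_right_distrib)
qed (rule ser_dx_scale)

lemma ser_dx_pow_linear: "Vector_Spaces.linear (ser_scale sM) (ser_scale sM) (ser_dx sM ^^ j)"
proof (induct j)
  case 0 show ?case by (rule linear_intro[OF S.vector_space_axioms S.vector_space_axioms]) auto
next
  case (Suc j) show ?case using linear_comp[OF Suc ser_dx_linear] by (simp add: comp_def)
qed

lemma ser_dx_sum: "ser_dx sM (sum g S) = (\<Sum>x\<in>S. ser_dx sM (g x))" using lin_sum[OF ser_dx_linear] .

lemma ser_dx_pow_apply:
  "(ser_dx sM ^^ j) m r = sM (of_nat (fact (r + j)) / of_nat (fact r)) (m (r + j))"
proof (induct j arbitrary: r)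
  case (Suc j)
  have "(ser_dx sM ^^ Suc j) m r = sM (of_nat (Suc r)) ((ser_dx sM ^^ j) m (Suc r))"
    by (simp add: ser_dx_def del: of_nat_Suc)
  also have "\<dots> = sM (of_nat (Suc r) * (of_nat (fact (Suc r + j)) / of_nat (fact (Suc r)))) (m (Suc r + j))"
    by (simp add: Suc M.scale_scale del: of_nat_Suc fact_Suc)
  also have "of_nat (Suc r) * (of_nat (fact (Suc r + j)) / of_nat (fact (Suc r))) =
             (of_nat (fact (r + Suc j)) / of_nat (fact r) :: 'k)"
  proof -
    have "(of_nat (fact (Suc r)) :: 'k) = of_nat (Suc r) * of_nat (fact r)"
      by (metis fact_Suc of_nat_id of_nat_mult)
    moreover have "(of_nat (Suc r) :: 'k) \<noteq> 0" "(of_nat (fact r) :: 'k) \<noteq> 0"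
      by (simp_all del: of_nat_Suc)
    moreover have "Suc r + j = r + Suc j" by simp
    ultimately show ?thesis by (simp add: field_simps del: of_nat_Suc)
  qed
  finally show ?case by simp
qed simp

lemma ser_mult_linear_left: "Vector_Spaces.linear (ser_scale sM) (ser_scale sM) (\<lambda>f. ser_mult mu f g)"
  by (rule linear_intro[OF S.vector_space_axioms S.vector_space_axioms])
     (auto simp: ser_mult_def ser_scale_def fun_eq_iff mu_add_left mu_scale_left sum.distrib M.scale_sum_right)

lemma ser_mult_linear_right: "Vector_Spaces.linear (ser_scale sM) (ser_scale sM) (ser_mult mu f)"
  by (rule linear_intro[OF S.vector_space_axioms S.vector_space_axioms])
     (auto simp: ser_mult_def ser_scale_def fun_eq_iff mu_add_right mu_scale_right sum.distrib M.scale_sum_right)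

lemma ser_mult_commute: "ser_mult mu f g = ser_mult mu g f"
proof (rule ext)
  show "ser_mult mu f g k = ser_mult mu g f k" for k
    unfolding ser_mult_def
    by (rule sum.reindex_bij_witness[where i="\<lambda>i. k - i" and j="\<lambda>i. k - i"]) (auto simp: mu_commute)
qed

lemma ser_mult_assoc: "ser_mult mu (ser_mult mu f g) h = ser_mult mu f (ser_mult mu g h)"
proof (rule ext)
  fix k
  define A where "A i j = mu (mu (f i) (g j)) (h (k - (i + j)))" for i j
  have "ser_mult mu (ser_mult mu f g) h k = (\<Sum>t\<le>k. \<Sum>i\<le>t. A i (t - i))"
    unfolding ser_mult_def A_def by (auto simp: mu_sum_left intro!: sum.cong)
  also have "\<dots> = (\<Sum>(i, j)\<in>{(i, j). i + j \<le> k}. A i j)"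
    by (rule sum.triangle_reindex_eq[symmetric])
  also have "\<dots> = (\<Sum>(i, j)\<in>Sigma {..k} (\<lambda>i. {..k - i}). A i j)"
    by (rule sum.cong) auto
  also have "\<dots> = (\<Sum>i\<le>k. \<Sum>j\<le>k - i. A i j)"
    by (rule sum.Sigma[symmetric]) auto
  also have "\<dots> = ser_mult mu f (ser_mult mu g h) k"
    unfolding ser_mult_def A_def by (auto simp: mu_sum_right mu_assoc intro!: sum.cong)
  finally show "ser_mult mu (ser_mult mu f g) h k = ser_mult mu f (ser_mult mu g h) k" .
qed

lemma ser_mult_left_commute: "ser_mult mu f (ser_mult mu g h) = ser_mult mu g (ser_mult mu f h)"
  by (metis ser_mult_assoc ser_mult_commute)

lemma ser_dx_mult: "ser_dx sM (ser_mult mu f g) = ser_mult mu (ser_dx sM f) g + ser_mult mu f (ser_dx sM g)"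
proof (rule ext)
  fix k
  define h where "h i = mu (f i) (g (Suc k - i))" for i
  have left: "ser_mult mu (ser_dx sM f) g k = (\<Sum>i\<le>Suc k. sM (of_nat i) (h i))"
  proof -
    have "ser_mult mu (ser_dx sM f) g k = (\<Sum>i\<le>k. sM (of_nat (Suc i)) (h (Suc i)))"
      by (simp add: ser_mult_def ser_dx_def h_def mu_scale_left)
    also have "\<dots> = (\<Sum>i\<le>Suc k. sM (of_nat i) (h i))"
      by (subst sum.atMost_Suc_shift) (simp del: of_nat_Suc)
    finally show ?thesis .
  qed
  have "ser_mult mu f (ser_dx sM g) k = (\<Sum>i\<le>k. sM (of_nat (Suc k - i)) (h i))"
    unfolding ser_mult_def ser_dx_def h_def
    by (rule sum.cong[OF refl]) (simp add: mu_scale_right Suc_diff_le)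
  then have right: "ser_mult mu f (ser_dx sM g) k = (\<Sum>i\<le>Suc k. sM (of_nat (Suc k - i)) (h i))"
    by simp
  have "ser_dx sM (ser_mult mu f g) k = (\<Sum>i\<le>Suc k. sM (of_nat (Suc k)) (h i))"
    unfolding ser_dx_def ser_mult_def h_def by (rule M.scale_sum_right)
  also have "\<dots> = (\<Sum>i\<le>Suc k. sM (of_nat i) (h i) + sM (of_nat (Suc k - i)) (h i))"
    by (intro sum.cong refl) (simp flip: M.scale_left_distrib of_nat_add)
  finally show "ser_dx sM (ser_mult mu f g) k = (ser_mult mu (ser_dx sM f) g + ser_mult mu f (ser_dx sM g)) k"
    by (simp add: left right sum.distrib)
qed

lemma ser_dx_pow_mult: "(ser_dx sM ^^ l) (ser_mult mu f g) =
   (\<Sum>s\<le>l. ser_scale sM (of_nat (l choose s)) (ser_mult mu ((ser_dx sM ^^ s) f) ((ser_dx sM ^^ (l - s)) g)))"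
proof (induct l arbitrary: f g)
  case (Suc l)
  define X where "X s = ser_mult mu ((ser_dx sM ^^ s) f) ((ser_dx sM ^^ (Suc l - s)) g)" for s
  have "(ser_dx sM ^^ Suc l) (ser_mult mu f g) =
        (ser_dx sM ^^ l) (ser_mult mu (ser_dx sM f) g) + (ser_dx sM ^^ l) (ser_mult mu f (ser_dx sM g))"
    by (simp add: funpow_Suc_right ser_dx_mult lin_add[OF ser_dx_pow_linear] del: funpow.simps)
  also have "\<dots> = (\<Sum>s\<le>l. ser_scale sM (of_nat (l choose s)) (X (Suc s))) +
                  (\<Sum>s\<le>l. ser_scale sM (of_nat (l choose s)) (X s))"
    unfolding Suc X_def by (simp add: Suc_diff_le funpow_Suc_right del: funpow.simps)
  also have "\<dots> = (\<Sum>s\<le>Suc l. ser_scale sM (of_nat (Suc l choose s)) (X s))"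
  proof -
    have "(\<Sum>s\<le>Suc l. ser_scale sM (of_nat (Suc l choose s)) (X s)) =
      (\<Sum>s\<le>Suc l. ser_scale sM (of_nat (if s = 0 then 0 else l choose (s - 1))) (X s)) +
      (\<Sum>s\<le>Suc l. ser_scale sM (of_nat (l choose s)) (X s))"
      unfolding sum.distrib[symmetric]
    proof (rule sum.cong[OF refl])
      fix s
      have "Suc l choose s = (if s = 0 then 0 else l choose (s - 1)) + (l choose s)"
        by (cases s) auto
      then show "ser_scale sM (of_nat (Suc l choose s)) (X s) =
        ser_scale sM (of_nat (if s = 0 then 0 else l choose (s - 1))) (X s) + ser_scale sM (of_nat (l choose s)) (X s)"
        by (simp only: of_nat_add S.scale_left_distrib)
    qed
    also have "\<dots> = (\<Sum>s\<le>l. ser_scale sM (of_nat (l choose s)) (X (Suc s))) +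
                    (\<Sum>s\<le>l. ser_scale sM (of_nat (l choose s)) (X s))"
      by (subst sum.atMost_Suc_shift) simp
    finally show ?thesis ..
  qed
  finally show ?case by (simp add: X_def)
qed simp

text \<open>Leibniz' rule run backwards: moving all derivatives of n(x) m(x) onto m.\<close>

lemma ser_mult_dx_pow_by_parts:
  "(\<Sum>k\<le>j. ser_scale sM ((-1) ^ k * of_nat (j choose k))
      ((ser_dx sM ^^ (j - k)) (ser_mult mu ((ser_dx sM ^^ k) n) m)))
   = ser_mult mu n ((ser_dx sM ^^ j) m)"
proof -
  define Z where "Z k n = ser_mult mu ((ser_dx sM ^^ k) n) m" for k n
  define Sj where "Sj j n = (\<Sum>k\<le>j. ser_scale sM ((-1) ^ k * of_nat (j choose k)) ((ser_dx sM ^^ (j - k)) (Z k n)))"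
    for j n
  have "Sj j n = ser_mult mu n ((ser_dx sM ^^ j) m)" for j
  proof (induct j arbitrary: n)
    case 0 then show ?case by (simp add: Sj_def Z_def)
  next
    case (Suc j)
    define c where "c k = ((-1) ^ k * of_nat (j choose k) :: 'k)" for k
    have split: "((-1) ^ k * of_nat (Suc j choose k) :: 'k) = c k + (if k = 0 then 0 else - c (k - 1))" for k
      by (cases k) (auto simp: c_def algebra_simps)
    have "Sj (Suc j) n = (\<Sum>k\<le>Suc j. ser_scale sM (c k) ((ser_dx sM ^^ (Suc j - k)) (Z k n)))
        + (\<Sum>k\<le>Suc j. ser_scale sM (if k = 0 then 0 else - c (k - 1)) ((ser_dx sM ^^ (Suc j - k)) (Z k n)))"
      unfolding Sj_def split by (simp add: S.scale_left_distrib sum.distrib)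
    also have "(\<Sum>k\<le>Suc j. ser_scale sM (c k) ((ser_dx sM ^^ (Suc j - k)) (Z k n))) = ser_dx sM (Sj j n)"
    proof -
      have "(\<Sum>k\<le>Suc j. ser_scale sM (c k) ((ser_dx sM ^^ (Suc j - k)) (Z k n))) =
         (\<Sum>k\<le>j. ser_dx sM (ser_scale sM (c k) ((ser_dx sM ^^ (j - k)) (Z k n))))"
        by (simp add: c_def binomial_eq_0 Suc_diff_le ser_dx_scale)
      then show ?thesis by (simp add: Sj_def ser_dx_sum c_def)
    qed
    also have "(\<Sum>k\<le>Suc j. ser_scale sM (if k = 0 then 0 else - c (k - 1)) ((ser_dx sM ^^ (Suc j - k)) (Z k n))) =
        - Sj j (ser_dx sM n)"
      by (subst sum.atMost_Suc_shift)
         (simp add: S.scale_minus_left sum_negf Z_def Sj_def c_def funpow_Suc_right del: funpow.simps)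
    finally show ?case by (simp add: Suc ser_dx_mult)
  qed
  then show ?thesis by (simp add: Sj_def Z_def)
qed

lemma ser_map_linear:
  "Vector_Spaces.linear sM sM d \<Longrightarrow> Vector_Spaces.linear (ser_scale sM) (ser_scale sM) (ser_map d)"
  by (rule linear_intro[OF S.vector_space_axioms S.vector_space_axioms])
     (auto simp: ser_map_def ser_scale_def fun_eq_iff lin_add lin_scale)

lemma ser_map_dx: "Vector_Spaces.linear sM sM d \<Longrightarrow> ser_map d (ser_dx sM n) = ser_dx sM (ser_map d n)"
  by (simp add: ser_map_def ser_dx_def fun_eq_iff lin_scale)

lemma ser_map_dx_pow:
  "Vector_Spaces.linear sM sM d \<Longrightarrow> ser_map d ((ser_dx sM ^^ j) n) = (ser_dx sM ^^ j) (ser_map d n)"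
  by (induct j) (auto simp: ser_map_dx)

lemma ser_map_derivation:
  assumes "Vector_Spaces.linear sM sM d" "\<And>f g. d (mu f g) = mu (d f) g + mu f (d g)"
  shows "ser_map d (ser_mult mu f g) = ser_mult mu (ser_map d f) g + ser_mult mu f (ser_map d g)"
  by (simp add: ser_map_def ser_mult_def fun_eq_iff lin_sum[OF assms(1)] assms(2) sum.distrib)

end


section \<open>The bracket on basic 1-chains\<close>

lemma degree_coeff_image_bounded:
  fixes q :: "'b::zero \<Rightarrow> 'c::zero poly"
  assumes "q 0 = 0"
  obtains Q where "\<And>j. degree (q (coeff p j)) \<le> Q"
proof
  show "degree (q (coeff p j)) \<le> (\<Sum>i\<le>degree p. degree (q (coeff p i)))" for j
    by (cases "j \<le> degree p") (auto intro: member_le_sum simp: coeff_eq_0 assms)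
qed

locale lca_module_algebra = series_product sM mu + tensor_prod sA "ser_scale sM" sT tens
  for sA :: "'k::field_char_0 \<Rightarrow> 'a::ab_group_add \<Rightarrow> 'a"
    and sM :: "'k \<Rightarrow> 'm::ab_group_add \<Rightarrow> 'm"
    and mu :: "'m \<Rightarrow> 'm \<Rightarrow> 'm"
    and sT :: "'k \<Rightarrow> 't::ab_group_add \<Rightarrow> 't"
    and tens :: "'a \<Rightarrow> (nat \<Rightarrow> 'm) \<Rightarrow> 't" +
  fixes dA :: "'a \<Rightarrow> 'a"
    and lb :: "'a \<Rightarrow> 'a \<Rightarrow> 'a poly"
    and dM :: "'m \<Rightarrow> 'm"
    and act :: "'a \<Rightarrow> 'm \<Rightarrow> 'm poly"
  assumes LCA: "lie_conformal_algebra sA dA lb"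
    and MOD: "lca_module sA dA lb sM dM act"
    and PROD: "derivation_algebra sM dM act mu"
begin

lemma dA_linear: "Vector_Spaces.linear sA sA dA"
  using LCA by (simp add: lie_conformal_algebra_def)
lemma dM_linear: "Vector_Spaces.linear sM sM dM"
  using MOD by (simp add: lca_module_def)
lemma lb_linear_left: "Vector_Spaces.linear sA sA (\<lambda>a. coeff (lb a b) j)"
  using LCA by (simp add: lie_conformal_algebra_def lca_bilinear_def)
lemma lb_linear_right: "Vector_Spaces.linear sA sA (\<lambda>b. coeff (lb a b) j)"
  using LCA by (simp add: lie_conformal_algebra_def lca_bilinear_def)
lemma act_linear_left: "Vector_Spaces.linear sA sM (\<lambda>a. coeff (act a m) j)"
  using MOD by (simp add: lca_module_def lca_bilinear_def)
lemma act_linear_right: "Vector_Spaces.linear sM sM (\<lambda>m. coeff (act a m) j)"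
  using MOD by (simp add: lca_module_def lca_bilinear_def)
lemma dM_derivation: "dM (mu m n) = mu (dM m) n + mu m (dM n)"
  using PROD unfolding derivation_algebra_def by blast
lemma act_derivation: "coeff (act a (mu m n)) j = mu (coeff (act a m) j) n + mu m (coeff (act a n) j)"
  using PROD unfolding derivation_algebra_def by blast
lemma lb_sesq_left: "coeff (lb (dA a) b) j = (if j = 0 then 0 else - coeff (lb a b) (j - 1))"
  using LCA by (simp add: lie_conformal_algebra_def sesquilinear_def)
lemma lb_sesq_right:
  "coeff (lb a (dA b)) j = dA (coeff (lb a b) j) + (if j = 0 then 0 else coeff (lb a b) (j - 1))"
  using LCA by (simp add: lie_conformal_algebra_def sesquilinear_def)
lemma act_sesq_left: "coeff (act (dA a) m) j = (if j = 0 then 0 else - coeff (act a m) (j - 1))"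
  using MOD by (simp add: lca_module_def sesquilinear_def)
lemma act_sesq_right:
  "coeff (act a (dM m)) j = dM (coeff (act a m) j) + (if j = 0 then 0 else coeff (act a m) (j - 1))"
  using MOD by (simp add: lca_module_def sesquilinear_def)
lemma lb_skew: "coeff (lb b a) k =
    - (\<Sum>j\<in>{k..degree (lb a b)}. sA ((-1) ^ j * of_nat (j choose k)) ((dA ^^ (j - k)) (coeff (lb a b) j)))"
  using LCA unfolding lie_conformal_algebra_def skew_symmetric_def by blast
lemma lb_jacobi: "coeff (lb a (coeff (lb b c) j)) i - coeff (lb b (coeff (lb a c) i)) j =
    (\<Sum>k\<le>i. sA (of_nat ((i + j - k) choose j)) (coeff (lb (coeff (lb a b) k) c) (i + j - k)))"
  using LCA unfolding lie_conformal_algebra_def jacobi_rule_def by blast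
lemma act_jacobi: "coeff (act a (coeff (act b f) p)) k - coeff (act b (coeff (act a f) k)) p =
    (\<Sum>i\<le>k. sM (of_nat ((k + p - i) choose p)) (coeff (act (coeff (lb a b) i) f) (k + p - i)))"
  using MOD unfolding lca_module_def jacobi_rule_def by blast

lemma lb_zero_left [simp]: "lb 0 b = 0" by (rule poly_eqI) (simp add: lin_zero[OF lb_linear_left])
lemma lb_zero_right [simp]: "lb a 0 = 0" by (rule poly_eqI) (simp add: lin_zero[OF lb_linear_right])
lemma act_zero_left [simp]: "act 0 f = 0" by (rule poly_eqI) (simp add: lin_zero[OF act_linear_left])
lemma act_zero_right [simp]: "act a 0 = 0" by (rule poly_eqI) (simp add: lin_zero[OF act_linear_right])

text \<open>In the notation above, curr_br is C, pairing u is X_u and pairing_op u is R_u.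
  Sums over coefficients are first truncated at an arbitrary bound N, so that linearity can be
  read off before the bound is fixed at the degree.\<close>

definition curr_trunc :: "nat \<Rightarrow> 'a \<Rightarrow> (nat \<Rightarrow> 'm) \<Rightarrow> 'a \<Rightarrow> (nat \<Rightarrow> 'm) \<Rightarrow> 't" where
  "curr_trunc N a m b n = (\<Sum>j\<le>N. tens (coeff (lb a b) j) (ser_mult mu ((ser_dx sM ^^ j) m) n))"

definition curr_pure :: "'a \<Rightarrow> (nat \<Rightarrow> 'm) \<Rightarrow> 'a \<Rightarrow> (nat \<Rightarrow> 'm) \<Rightarrow> 't" where
  "curr_pure a m b n = curr_trunc (degree (lb a b)) a m b n"

definition pairing_trunc :: "nat \<Rightarrow> 'a \<Rightarrow> (nat \<Rightarrow> 'm) \<Rightarrow> 'm \<Rightarrow> 'm" where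
  "pairing_trunc N a m f = (\<Sum>p\<le>N. sM (of_nat (fact p)) (mu (m p) (coeff (act a f) p)))"

definition pairing_pure :: "'a \<Rightarrow> (nat \<Rightarrow> 'm) \<Rightarrow> 'm \<Rightarrow> 'm" where
  "pairing_pure a m f = pairing_trunc (degree (act a f)) a m f"

lemma curr_pure_eq_trunc: "degree (lb a b) \<le> N \<Longrightarrow> curr_pure a m b n = curr_trunc N a m b n"
  unfolding curr_pure_def curr_trunc_def
  by (rule sum_coeff_atMost_degree[where g="\<lambda>c j. tens c (ser_mult mu ((ser_dx sM ^^ j) m) n)", symmetric]) auto

lemma pairing_pure_eq_trunc: "degree (act a f) \<le> N \<Longrightarrow> pairing_pure a m f = pairing_trunc N a m f"
  unfolding pairing_pure_def pairing_trunc_def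
  by (rule sum_coeff_atMost_degree[where g="\<lambda>c p. sM (of_nat (fact p)) (mu (m p) c)", symmetric]) auto

lemma curr_pure_linear_a: "Vector_Spaces.linear sA sT (\<lambda>a. curr_pure a m b n)"
  by (rule linear_eventually_eq[where g="\<lambda>N a. curr_trunc N a m b n"])
     (use curr_pure_eq_trunc in blast,
      unfold curr_trunc_def, intro linear_sum_fun linear_comp[OF lb_linear_left tens_linear_left]
        A.vector_space_axioms T.vector_space_axioms)

lemma curr_pure_linear_b: "Vector_Spaces.linear sA sT (\<lambda>b. curr_pure a m b n)"
  by (rule linear_eventually_eq[where g="\<lambda>N b. curr_trunc N a m b n"])
     (use curr_pure_eq_trunc in blast,
      unfold curr_trunc_def, intro linear_sum_fun linear_comp[OF lb_linear_right tens_linear_left]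
        A.vector_space_axioms T.vector_space_axioms)

lemma curr_pure_linear_m: "Vector_Spaces.linear (ser_scale sM) sT (\<lambda>m. curr_pure a m b n)"
  unfolding curr_pure_def curr_trunc_def
  by (intro linear_sum_fun linear_comp[OF linear_comp[OF ser_dx_pow_linear ser_mult_linear_left] tens_linear_right]
      S.vector_space_axioms T.vector_space_axioms)

lemma curr_pure_linear_n: "Vector_Spaces.linear (ser_scale sM) sT (\<lambda>n. curr_pure a m b n)"
  unfolding curr_pure_def curr_trunc_def
  by (intro linear_sum_fun linear_comp[OF ser_mult_linear_right tens_linear_right]
      S.vector_space_axioms T.vector_space_axioms)

lemma pairing_pure_linear_a: "Vector_Spaces.linear sA sM (\<lambda>a. pairing_pure a m f)"
  by (rule linear_eventually_eq[where g="\<lambda>N a. pairing_trunc N a m f"])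
     (use pairing_pure_eq_trunc in blast,
      unfold pairing_trunc_def, intro linear_sum_fun A.vector_space_axioms M.vector_space_axioms
        linear_comp[OF linear_comp[OF act_linear_left mu_linear_right] linear_scale_self])

lemma pairing_pure_linear_f: "Vector_Spaces.linear sM sM (pairing_pure a m)"
  by (rule linear_eventually_eq[where g="\<lambda>N f. pairing_trunc N a m f"])
     (use pairing_pure_eq_trunc in blast,
      unfold pairing_trunc_def, intro linear_sum_fun M.vector_space_axioms
        linear_comp[OF linear_comp[OF act_linear_right mu_linear_right] linear_scale_self])

lemma pairing_pure_linear_m: "Vector_Spaces.linear (ser_scale sM) sM (\<lambda>m. pairing_pure a m f)"
proof -
  have "Vector_Spaces.linear (ser_scale sM) sM (\<lambda>m. m p)" for p :: nat
    by (rule linear_intro[OF S.vector_space_axioms M.vector_space_axioms]) (auto simp: ser_scale_def)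
  then show ?thesis unfolding pairing_pure_def pairing_trunc_def
    by (intro linear_sum_fun S.vector_space_axioms M.vector_space_axioms
        linear_comp[OF linear_comp[OF _ mu_linear_left] linear_scale_self])
qed

definition curr_br :: "'t \<Rightarrow> 't \<Rightarrow> 't" where
  "curr_br = tensor_lift2 sT curr_pure"

lemma curr_br_linear_left: "Vector_Spaces.linear sT sT (\<lambda>u. curr_br u v)"
  unfolding curr_br_def
  by (rule tensor_lift2_linear_left; fact curr_pure_linear_a curr_pure_linear_m curr_pure_linear_b
      curr_pure_linear_n)

lemma curr_br_linear_right: "Vector_Spaces.linear sT sT (curr_br u)"
  unfolding curr_br_def
  by (rule tensor_lift2_linear_right; fact curr_pure_linear_a curr_pure_linear_m curr_pure_linear_b
      curr_pure_linear_n)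

lemma curr_br_tens: "curr_br (tens a m) (tens b n) = curr_pure a m b n"
  unfolding curr_br_def
  by (rule tensor_lift2_tens; fact curr_pure_linear_a curr_pure_linear_m curr_pure_linear_b
      curr_pure_linear_n)

definition pairing :: "'t \<Rightarrow> 'm \<Rightarrow> 'm" where
  "pairing u f = tensor_lift sM (\<lambda>a m. pairing_pure a m f) u"

lemma pairing_linear_left: "Vector_Spaces.linear sT sM (\<lambda>u. pairing u f)"
  unfolding pairing_def by (rule tensor_lift_linear; fact pairing_pure_linear_a pairing_pure_linear_m)

lemma pairing_linear_right: "Vector_Spaces.linear sM sM (pairing u)"
  unfolding pairing_def
  by (rule tensor_lift_linear_param; fact pairing_pure_linear_a pairing_pure_linear_m pairing_pure_linear_f)

lemma pairing_tens: "pairing (tens a m) = pairing_pure a m"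
  unfolding pairing_def
  by (rule ext, rule tensor_lift_tens; fact pairing_pure_linear_a pairing_pure_linear_m)

definition pairing_op :: "'t \<Rightarrow> 't \<Rightarrow> 't" where
  "pairing_op u = tensor_lift sT (\<lambda>b n. tens b (ser_map (pairing u) n))"

lemma pairing_op_linear_right: "Vector_Spaces.linear sT sT (pairing_op u)"
  unfolding pairing_op_def
  by (rule tensor_lift_linear[OF tens_linear_left linear_comp[OF ser_map_linear[OF pairing_linear_right]
        tens_linear_right]])

lemma pairing_op_tens: "pairing_op u (tens b n) = tens b (ser_map (pairing u) n)"
  unfolding pairing_op_def
  by (rule tensor_lift_tens[OF tens_linear_left linear_comp[OF ser_map_linear[OF pairing_linear_right]
        tens_linear_right]])

lemma pairing_op_linear_left: "Vector_Spaces.linear sT sT (\<lambda>u. pairing_op u v)"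
proof -
  have "Vector_Spaces.linear sT sT (\<lambda>u. tens b (ser_map (pairing u) n))" for b n
  proof (rule linear_intro[OF T.vector_space_axioms T.vector_space_axioms])
    show "tens b (ser_map (pairing (u + u')) n) = tens b (ser_map (pairing u) n) + tens b (ser_map (pairing u') n)"
      for u u'
      by (simp add: ser_map_def lin_add[OF pairing_linear_left] plus_fun_def flip: tens_add_right)
    show "tens b (ser_map (pairing (sT c u)) n) = sT c (tens b (ser_map (pairing u) n))" for c u
      by (simp add: ser_map_def ser_scale_def lin_scale[OF pairing_linear_left] flip: tens_scale_right)
  qed
  then show ?thesis unfolding pairing_op_def
    by (rule tensor_lift_linear_param[OF tens_linear_left
          linear_comp[OF ser_map_linear[OF pairing_linear_right] tens_linear_right]])
qed

definition chain_br :: "'t \<Rightarrow> 't \<Rightarrow> 't" where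
  "chain_br u v = curr_br u v + pairing_op u v - pairing_op v u"

lemma chain_br_linear_left: "Vector_Spaces.linear sT sT (\<lambda>u. chain_br u v)"
  unfolding chain_br_def
  by (intro linear_diff_fun linear_add_fun curr_br_linear_left pairing_op_linear_left pairing_op_linear_right)

lemma chain_br_linear_right: "Vector_Spaces.linear sT sT (chain_br u)"
  unfolding chain_br_def
  by (intro linear_diff_fun linear_add_fun curr_br_linear_right pairing_op_linear_left pairing_op_linear_right)

lemma chain_br_tens: "chain_br (tens a m) (tens b n) = chain_bracket_pure sM lb act mu tens a m b n"
proof -
  have "pair_act sM act mu n b m = ser_map (pairing_pure b n) m" for b m n
    by (simp add: pair_act_def ser_map_def pairing_pure_def pairing_trunc_def)
  then show ?thesis
    by (simp add: chain_br_def chain_bracket_pure_def curr_br_tens pairing_op_tens pairing_tens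
        curr_pure_def curr_trunc_def)
qed

definition D_x :: "'t \<Rightarrow> 't" where
  "D_x = tensor_lift sT (\<lambda>a m. tens (dA a) m + tens a (ser_dx sM m))"

definition D_M :: "'t \<Rightarrow> 't" where
  "D_M = tensor_lift sT (\<lambda>a m. tens (dA a) m + tens a (ser_map dM m))"

lemma
  shows D_x_linear: "Vector_Spaces.linear sT sT D_x"
    and D_x_tens: "D_x (tens a m) = tens (dA a) m + tens a (ser_dx sM m)"
  unfolding D_x_def
  by (rule tensor_lift_linear tensor_lift_tens;
      intro linear_add_fun linear_comp[OF dA_linear tens_linear_left] tens_linear_left tens_linear_right
        linear_comp[OF ser_dx_linear tens_linear_right])+

lemma
  shows D_M_linear: "Vector_Spaces.linear sT sT D_M"
    and D_M_tens: "D_M (tens a m) = tens (dA a) m + tens a (ser_map dM m)"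
  unfolding D_M_def
  by (rule tensor_lift_linear tensor_lift_tens;
      intro linear_add_fun linear_comp[OF dA_linear tens_linear_left] tens_linear_left tens_linear_right
        linear_comp[OF ser_map_linear[OF dM_linear] tens_linear_right])+

lemma range_D_x_subspace: "T.subspace (range D_x)"
  by (rule linear_range_subspace[OF D_x_linear])

lemma curr_pure_D_x_left: "curr_pure (dA a) m b n + curr_pure a (ser_dx sM m) b n = 0"
proof -
  define N where "N = Suc (max (degree (lb a b)) (degree (lb (dA a) b)))"
  define X where "X j = ser_mult mu ((ser_dx sM ^^ j) m) n" for j
  have "curr_pure (dA a) m b n = curr_trunc (Suc N) (dA a) m b n"
    by (rule curr_pure_eq_trunc) (simp add: N_def)
  also have "\<dots> = - (\<Sum>j\<le>N. tens (coeff (lb a b) j) (X (Suc j)))"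
    unfolding curr_trunc_def
    by (subst sum.atMost_Suc_shift) (simp add: lb_sesq_left X_def tens_minus_left sum_negf del: funpow.simps)
  moreover have "curr_pure a (ser_dx sM m) b n = curr_trunc N a (ser_dx sM m) b n"
    by (rule curr_pure_eq_trunc) (simp add: N_def)
  moreover have "\<dots> = (\<Sum>j\<le>N. tens (coeff (lb a b) j) (X (Suc j)))"
    by (simp add: curr_trunc_def X_def funpow_Suc_right del: funpow.simps)
  ultimately show ?thesis by simp
qed

lemma curr_pure_D_x_right:
  "curr_pure a m (dA b) n + curr_pure a m b (ser_dx sM n) = D_x (curr_pure a m b n)"
proof -
  define N where "N = Suc (max (degree (lb a b)) (degree (lb a (dA b))))"
  define X where "X j = ser_mult mu ((ser_dx sM ^^ j) m) n" for j
  define c where "c j = coeff (lb a b) j" for j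
  have deg: "degree (lb a b) \<le> Suc N" by (simp add: N_def)
  have "c (Suc N) = 0" "c N = 0" by (auto intro!: coeff_eq_0 simp: N_def c_def)
  then have shift: "(\<Sum>j\<le>Suc N. tens (if j = 0 then 0 else c (j - 1)) (X j)) =
      (\<Sum>j\<le>Suc N. tens (c j) (X (Suc j)))"
    by (subst sum.atMost_Suc_shift) simp
  have "curr_pure a m (dA b) n = curr_trunc (Suc N) a m (dA b) n"
    by (rule curr_pure_eq_trunc) (simp add: N_def)
  also have "\<dots> = (\<Sum>j\<le>Suc N. tens (dA (c j)) (X j) + tens (if j = 0 then 0 else c (j - 1)) (X j))"
    unfolding curr_trunc_def
    by (intro sum.cong refl) (simp add: lb_sesq_right X_def c_def tens_add_left del: funpow.simps)
  finally have dA_b: "curr_pure a m (dA b) n =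
      (\<Sum>j\<le>Suc N. tens (dA (c j)) (X j)) + (\<Sum>j\<le>Suc N. tens (c j) (X (Suc j)))"
    by (simp only: sum.distrib shift)
  have dx_n: "curr_pure a m b (ser_dx sM n) =
      (\<Sum>j\<le>Suc N. tens (c j) (ser_dx sM (X j))) - (\<Sum>j\<le>Suc N. tens (c j) (X (Suc j)))"
    unfolding curr_pure_eq_trunc[OF deg]
    by (simp add: curr_trunc_def X_def c_def ser_dx_mult tens_add_right sum.distrib)
  have "D_x (curr_pure a m b n) = (\<Sum>j\<le>Suc N. tens (dA (c j)) (X j) + tens (c j) (ser_dx sM (X j)))"
    unfolding curr_pure_eq_trunc[OF deg] curr_trunc_def lin_sum[OF D_x_linear]
    by (simp add: D_x_tens c_def X_def)
  then show ?thesis unfolding dA_b dx_n by (simp add: sum.distrib)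
qed

lemma curr_br_D_x_left: "curr_br (D_x u) v = 0"
proof (rule tensor_bilinear_ext[where F="\<lambda>u v. curr_br (D_x u) v" and G="\<lambda>u v. 0"])
  show "Vector_Spaces.linear sT sT (\<lambda>u. curr_br (D_x u) v)" for v
    by (rule linear_comp[OF D_x_linear curr_br_linear_left])
  show "Vector_Spaces.linear sT sT (curr_br (D_x u))" for u
    by (rule curr_br_linear_right)
  show "Vector_Spaces.linear sT sT (\<lambda>u. 0)" "Vector_Spaces.linear sT sT (\<lambda>v. 0)"
    by (rule linear_zero_fun[OF T.vector_space_axioms T.vector_space_axioms])+
qed (simp add: D_x_tens lin_add[OF curr_br_linear_left] curr_br_tens curr_pure_D_x_left)

lemma curr_br_D_x_right: "curr_br u (D_x v) = D_x (curr_br u v)"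
proof (rule tensor_bilinear_ext[where F="\<lambda>u v. curr_br u (D_x v)" and G="\<lambda>u v. D_x (curr_br u v)"])
  show "Vector_Spaces.linear sT sT (\<lambda>u. curr_br u (D_x v))" for v
    by (rule curr_br_linear_left)
  show "Vector_Spaces.linear sT sT (\<lambda>v. curr_br u (D_x v))" for u
    by (rule linear_comp[OF D_x_linear curr_br_linear_right])
  show "Vector_Spaces.linear sT sT (\<lambda>u. D_x (curr_br u v))" for v
    by (rule linear_comp[OF curr_br_linear_left D_x_linear])
  show "Vector_Spaces.linear sT sT (\<lambda>v. D_x (curr_br u v))" for u
    by (rule linear_comp[OF curr_br_linear_right D_x_linear])
qed (simp add: D_x_tens lin_add[OF curr_br_linear_right] curr_br_tens curr_pure_D_x_right)

lemma pairing_pure_D_x: "pairing_pure (dA a) m f + pairing_pure a (ser_dx sM m) f = 0"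
proof -
  define N where "N = Suc (max (degree (act a f)) (degree (act (dA a) f)))"
  define h where "h p = mu (m (Suc p)) (coeff (act a f) p)" for p
  have "pairing_pure (dA a) m f = pairing_trunc (Suc N) (dA a) m f"
    by (rule pairing_pure_eq_trunc) (simp add: N_def)
  also have "\<dots> = - (\<Sum>p\<le>N. sM (of_nat (fact (Suc p))) (h p))"
    unfolding pairing_trunc_def
    by (subst sum.atMost_Suc_shift)
       (simp add: act_sesq_left h_def mu_minus_right sum_negf del: fact_Suc of_nat_Suc)
  moreover have "pairing_pure a (ser_dx sM m) f = pairing_trunc N a (ser_dx sM m) f"
    by (rule pairing_pure_eq_trunc) (simp add: N_def)
  moreover have "\<dots> = (\<Sum>p\<le>N. sM (of_nat (fact (Suc p))) (h p))"
    unfolding pairing_trunc_def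
  proof (intro sum.cong refl)
    fix p
    have "(of_nat (fact p) * of_nat (Suc p) :: 'k) = of_nat (fact (Suc p))"
      by (simp add: algebra_simps)
    then show "sM (of_nat (fact p)) (mu (ser_dx sM m p) (coeff (act a f) p)) = sM (of_nat (fact (Suc p))) (h p)"
      by (simp add: ser_dx_def h_def mu_scale_left del: fact_Suc of_nat_Suc)
  qed
  ultimately show ?thesis by simp
qed

lemma pairing_D_x: "pairing (D_x u) f = 0"
  by (rule tensor_linear_ext[OF linear_comp[OF D_x_linear pairing_linear_left]
        linear_zero_fun[OF T.vector_space_axioms M.vector_space_axioms]])
     (simp add: D_x_tens lin_add[OF pairing_linear_left] pairing_tens pairing_pure_D_x)

lemma pairing_pure_derivation:
  "pairing_pure a m (mu f g) = mu (pairing_pure a m f) g + mu f (pairing_pure a m g)"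
proof -
  define N where "N = max (degree (act a (mu f g))) (max (degree (act a f)) (degree (act a g)))"
  have "pairing_trunc N a m (mu f g) = mu (pairing_trunc N a m f) g + mu f (pairing_trunc N a m g)"
    unfolding pairing_trunc_def
    by (simp add: act_derivation mu_add_right M.scale_right_distrib sum.distrib mu_sum_left mu_sum_right
        mu_scale_left mu_scale_right mu_assoc)
       (simp add: mu_assoc[symmetric] mu_commute)
  then show ?thesis by (simp add: pairing_pure_eq_trunc[of _ _ N] N_def)
qed

lemma pairing_derivation: "pairing u (mu f g) = mu (pairing u f) g + mu f (pairing u g)"
  by (rule tensor_linear_ext[OF pairing_linear_left linear_add_fun[OF
        linear_comp[OF pairing_linear_left mu_linear_left] linear_comp[OF pairing_linear_left mu_linear_right]]])
     (simp add: pairing_tens pairing_pure_derivation)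

lemma pairing_op_D_x_right: "pairing_op u (D_x v) = D_x (pairing_op u v)"
  by (rule tensor_linear_ext[OF linear_comp[OF D_x_linear pairing_op_linear_right]
        linear_comp[OF pairing_op_linear_right D_x_linear]])
     (simp add: D_x_tens pairing_op_tens lin_add[OF pairing_op_linear_right] ser_map_dx[OF pairing_linear_right])

lemma pairing_op_curr_br: "pairing_op u (curr_br v w) = curr_br (pairing_op u v) w + curr_br v (pairing_op u w)"
proof (rule tensor_bilinear_ext[where F="\<lambda>v w. pairing_op u (curr_br v w)"])
  show "Vector_Spaces.linear sT sT (\<lambda>v. pairing_op u (curr_br v w))" for w
    by (rule linear_comp[OF curr_br_linear_left pairing_op_linear_right])
  show "Vector_Spaces.linear sT sT (\<lambda>w. pairing_op u (curr_br v w))" for v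
    by (rule linear_comp[OF curr_br_linear_right pairing_op_linear_right])
  show "Vector_Spaces.linear sT sT (\<lambda>v. curr_br (pairing_op u v) w + curr_br v (pairing_op u w))" for w
    by (rule linear_add_fun[OF linear_comp[OF pairing_op_linear_right curr_br_linear_left] curr_br_linear_left])
  show "Vector_Spaces.linear sT sT (\<lambda>w. curr_br (pairing_op u v) w + curr_br v (pairing_op u w))" for v
    by (rule linear_add_fun[OF curr_br_linear_right linear_comp[OF pairing_op_linear_right curr_br_linear_right]])
qed (simp add: curr_br_tens pairing_op_tens curr_pure_def curr_trunc_def lin_sum[OF pairing_op_linear_right]
      ser_map_derivation[OF pairing_linear_right pairing_derivation] ser_map_dx_pow[OF pairing_linear_right]
      tens_add_right sum.distrib)

lemma pairing_op_D_x_left: "pairing_op (D_x u) v = 0"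
proof -
  have vanish: "ser_map (pairing (D_x u)) n = 0" for n by (simp add: ser_map_def fun_eq_iff pairing_D_x)
  show ?thesis
    by (rule tensor_linear_ext[OF pairing_op_linear_right
          linear_zero_fun[OF T.vector_space_axioms T.vector_space_axioms]])
       (simp add: pairing_op_tens vanish)
qed

lemma pairing_pure_comp:
  assumes "degree (act b f) \<le> N"
  shows "pairing_pure a m (pairing_pure b n f) = pairing_pure b (ser_map (pairing_pure a m) n) f +
     (\<Sum>p\<le>N. sM (of_nat (fact p)) (mu (n p) (pairing_pure a m (coeff (act b f) p))))"
proof -
  have "pairing_pure a m (pairing_pure b n f) =
      (\<Sum>p\<le>N. sM (of_nat (fact p)) (mu (pairing_pure a m (n p)) (coeff (act b f) p)) +
        sM (of_nat (fact p)) (mu (n p) (pairing_pure a m (coeff (act b f) p))))"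
    by (simp add: pairing_pure_eq_trunc[OF assms] pairing_trunc_def lin_sum[OF pairing_pure_linear_f]
        lin_scale[OF pairing_pure_linear_f] pairing_pure_derivation M.scale_right_distrib)
  also have "\<dots> = pairing_pure b (ser_map (pairing_pure a m) n) f +
     (\<Sum>p\<le>N. sM (of_nat (fact p)) (mu (n p) (pairing_pure a m (coeff (act b f) p))))"
    by (simp add: sum.distrib pairing_trunc_def ser_map_def pairing_pure_eq_trunc[OF assms])
  finally show ?thesis .
qed

lemma pairing_curr_pure_expand:
  assumes "degree (lb a b) \<le> K" and "\<And>j. degree (act (coeff (lb a b) j) f) \<le> K"
  shows "pairing (curr_pure a m b n) f =
    (\<Sum>j\<le>K. \<Sum>q\<le>K. \<Sum>r\<le>q. sM (of_nat (fact q) * (of_nat (fact (r + j)) / of_nat (fact r)))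
      (mu (mu (m (r + j)) (n (q - r))) (coeff (act (coeff (lb a b) j) f) q)))"
proof -
  have "pairing (curr_pure a m b n) f =
      (\<Sum>j\<le>K. pairing_trunc K (coeff (lb a b) j) (ser_mult mu ((ser_dx sM ^^ j) m) n) f)"
    by (simp add: curr_pure_eq_trunc[OF assms(1)] curr_trunc_def lin_sum[OF pairing_linear_left]
        pairing_tens pairing_pure_eq_trunc[OF assms(2)])
  also have "\<dots> = (\<Sum>j\<le>K. \<Sum>q\<le>K. \<Sum>r\<le>q. sM (of_nat (fact q) * (of_nat (fact (r + j)) / of_nat (fact r)))
      (mu (mu (m (r + j)) (n (q - r))) (coeff (act (coeff (lb a b) j) f) q)))"
    by (simp add: pairing_trunc_def ser_mult_def ser_dx_pow_apply mu_sum_left mu_scale_left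
        M.scale_sum_right M.scale_scale mult.commute add.commute)
  finally show ?thesis .
qed

lemma pairing_pure_jacobi_expand:
  assumes "\<And>p. degree (act a (coeff (act b f) p)) \<le> K" and "\<And>k. degree (act b (coeff (act a f) k)) \<le> K"
  shows "(\<Sum>p\<le>K. sM (of_nat (fact p)) (mu (n p) (pairing_pure a m (coeff (act b f) p)))) -
         (\<Sum>k\<le>K. sM (of_nat (fact k)) (mu (m k) (pairing_pure b n (coeff (act a f) k)))) =
    (\<Sum>k\<le>K. \<Sum>p\<le>K. \<Sum>i\<le>k. sM (of_nat (fact k) * of_nat (fact p) * of_nat ((k + p - i) choose p))
        (mu (mu (m k) (n p)) (coeff (act (coeff (lb a b) i) f) (k + p - i))))"
proof -
  let ?w = "\<lambda>k p. sM (of_nat (fact k) * of_nat (fact p))"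
  have "(\<Sum>p\<le>K. sM (of_nat (fact p)) (mu (n p) (pairing_pure a m (coeff (act b f) p)))) =
      (\<Sum>p\<le>K. \<Sum>k\<le>K. ?w k p (mu (mu (m k) (n p)) (coeff (act a (coeff (act b f) p)) k)))"
    by (intro sum.cong refl)
       (simp add: pairing_pure_eq_trunc[OF assms(1)] pairing_trunc_def mu_sum_right mu_scale_right
        M.scale_sum_right M.scale_scale mult.commute mu_assoc[symmetric] mu_commute[of "n _" "m _"])
  also have "\<dots> = (\<Sum>k\<le>K. \<Sum>p\<le>K. ?w k p (mu (mu (m k) (n p)) (coeff (act a (coeff (act b f) p)) k)))"
    by (rule sum.swap)
  finally have left: "(\<Sum>p\<le>K. sM (of_nat (fact p)) (mu (n p) (pairing_pure a m (coeff (act b f) p)))) =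
      (\<Sum>k\<le>K. \<Sum>p\<le>K. ?w k p (mu (mu (m k) (n p)) (coeff (act a (coeff (act b f) p)) k)))" .
  have right: "(\<Sum>k\<le>K. sM (of_nat (fact k)) (mu (m k) (pairing_pure b n (coeff (act a f) k)))) =
      (\<Sum>k\<le>K. \<Sum>p\<le>K. ?w k p (mu (mu (m k) (n p)) (coeff (act b (coeff (act a f) k)) p)))"
    by (intro sum.cong refl)
       (simp add: pairing_pure_eq_trunc[OF assms(2)] pairing_trunc_def mu_sum_right mu_scale_right
        M.scale_sum_right M.scale_scale mult.commute mu_assoc[symmetric])
  have "(\<Sum>k\<le>K. \<Sum>p\<le>K. ?w k p (mu (mu (m k) (n p)) (coeff (act a (coeff (act b f) p)) k))) -
      (\<Sum>k\<le>K. \<Sum>p\<le>K. ?w k p (mu (mu (m k) (n p)) (coeff (act b (coeff (act a f) k)) p))) =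
    (\<Sum>k\<le>K. \<Sum>p\<le>K. ?w k p (mu (mu (m k) (n p))
         (coeff (act a (coeff (act b f) p)) k - coeff (act b (coeff (act a f) k)) p)))"
    by (simp add: sum_subtractf[symmetric] mu_diff_right M.scale_right_diff_distrib)
  also have "\<dots> = (\<Sum>k\<le>K. \<Sum>p\<le>K. \<Sum>i\<le>k. sM (of_nat (fact k) * of_nat (fact p) * of_nat ((k + p - i) choose p))
        (mu (mu (m k) (n p)) (coeff (act (coeff (lb a b) i) f) (k + p - i))))"
    by (simp add: act_jacobi mu_sum_right mu_scale_right M.scale_sum_right M.scale_scale)
  finally show ?thesis unfolding left right .
qed

text \<open>Both expansions are sums over the same terms, indexed by (j, q, r) on one side and
  (k, p, i) = (r + j, q - r, j) on the other.\<close>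

lemma pairing_jacobi_reindex:
  fixes E w :: "nat \<Rightarrow> nat \<Rightarrow> 'm"
  assumes E0: "\<And>i q. J < i \<or> Q < q \<Longrightarrow> E i q = 0" and K: "Q + J \<le> K"
  shows "(\<Sum>j\<le>K. \<Sum>q\<le>K. \<Sum>r\<le>q. sM (of_nat (fact q) * (of_nat (fact (r + j)) / of_nat (fact r)))
            (mu (w (r + j) (q - r)) (E j q)))
   = (\<Sum>k\<le>K. \<Sum>p\<le>K. \<Sum>i\<le>k. sM (of_nat (fact k) * of_nat (fact p) * of_nat ((k + p - i) choose p))
            (mu (w k p) (E i (k + p - i))))"
proof -
  define F where "F = (\<lambda>(j, q, r). sM (of_nat (fact q) * (of_nat (fact (r + j)) / of_nat (fact r)))
      (mu (w (r + j) (q - r)) (E j q)))"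
  define G where "G = (\<lambda>(k, p, i). sM (of_nat (fact k) * of_nat (fact p) * of_nat ((k + p - i) choose p))
      (mu (w k p) (E i (k + p - i))))"
  have box: "finite {(x, y, z). x \<in> {..K} \<and> y \<in> {..K} \<and> z \<in> {..y}}"
    "finite {(x, y, z). x \<in> {..K} \<and> y \<in> {..K} \<and> z \<in> {..x}}"
    by (rule finite_subset[of _ "{..K} \<times> {..K} \<times> {..K}"]; auto)+
  have "sum F {(j, q, r). j \<in> {..K} \<and> q \<in> {..K} \<and> r \<in> {..q}} =
        sum G {(k, p, i). k \<in> {..K} \<and> p \<in> {..K} \<and> i \<in> {..k}}"
  proof (rule sum_bij_betw_support[OF box, where S'="{(j, q, r). j \<le> J \<and> q \<le> Q \<and> r \<le> q}"
        and T'="{(k, p, i). k \<le> K \<and> i \<le> k \<and> i \<le> J \<and> k + p - i \<le> Q}"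
        and h="\<lambda>(j, q, r). (r + j, q - r, j)"])
    show "bij_betw (\<lambda>(j, q, r). (r + j, q - r, j)) {(j, q, r). j \<le> J \<and> q \<le> Q \<and> r \<le> q}
        {(k, p, i). k \<le> K \<and> i \<le> k \<and> i \<le> J \<and> k + p - i \<le> Q}"
      by (rule bij_betw_byWitness[where f'="\<lambda>(k, p, i). (i, k + p - i, k - i)"]) (use K in auto)
    show "G ((\<lambda>(j, q, r). (r + j, q - r, j)) x) = F x" if "x \<in> {(j, q, r). j \<le> J \<and> q \<le> Q \<and> r \<le> q}" for x
    proof -
      from that obtain j q r where x: "x = (j, q, r)" and "r \<le> q" by auto
      then have "(of_nat (fact (r + j)) * of_nat (fact (q - r)) * of_nat (q choose (q - r)) :: 'k)
          = of_nat (fact q) * (of_nat (fact (r + j)) / of_nat (fact r))"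
        by (simp add: binomial_fact field_simps)
      moreover have "r + j + (q - r) - j = q" using \<open>r \<le> q\<close> by simp
      ultimately show ?thesis by (simp add: x F_def G_def)
    qed
    show "F x = 0" if "x \<in> {(j, q, r). j \<in> {..K} \<and> q \<in> {..K} \<and> r \<in> {..q}} -
        {(j, q, r). j \<le> J \<and> q \<le> Q \<and> r \<le> q}" for x
    proof -
      from that obtain j q r where "x = (j, q, r)" "\<not> (j \<le> J \<and> q \<le> Q)" by auto
      then show ?thesis by (simp add: F_def E0 not_le)
    qed
    show "G y = 0" if "y \<in> {(k, p, i). k \<in> {..K} \<and> p \<in> {..K} \<and> i \<in> {..k}} -
        {(k, p, i). k \<le> K \<and> i \<le> k \<and> i \<le> J \<and> k + p - i \<le> Q}" for y
    proof -
      from that obtain k p i where "y = (k, p, i)" "\<not> (i \<le> J \<and> k + p - i \<le> Q)" by auto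
      then show ?thesis by (simp add: G_def E0 not_le)
    qed
  qed (use K in auto)
  then show ?thesis unfolding F_def G_def by (simp add: sum_nested3 case_prod_beta')
qed

text \<open>The pairing turns the bracket into the commutator of derivations of M; on pure tensors
  this is the module Jacobi identity, after expanding both sides to a common finite range.\<close>

lemma pairing_chain_br_tens:
  "pairing (chain_br (tens a m) (tens b n)) f =
     pairing_pure a m (pairing_pure b n f) - pairing_pure b n (pairing_pure a m f)"
proof -
  obtain Q where Q: "\<And>j. degree (act (coeff (lb a b) j) f) \<le> Q"
    using degree_coeff_image_bounded[of "\<lambda>c. act c f"] by auto
  obtain QA where QA: "\<And>p. degree (act a (coeff (act b f) p)) \<le> QA"
    using degree_coeff_image_bounded[of "act a"] by auto
  obtain QB where QB: "\<And>k. degree (act b (coeff (act a f) k)) \<le> QB"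
    using degree_coeff_image_bounded[of "act b"] by auto
  define K where "K = degree (lb a b) + Q + QA + QB + degree (act b f) + degree (act a f)"
  have bounds: "degree (lb a b) \<le> K" "degree (act (coeff (lb a b) j) f) \<le> K"
    "degree (act a (coeff (act b f) p)) \<le> K" "degree (act b (coeff (act a f) k)) \<le> K"
    "degree (act b f) \<le> K" "degree (act a f) \<le> K" for j p k
    using Q[of j] QA[of p] QB[of k] by (simp_all add: K_def)
  have E0: "coeff (act (coeff (lb a b) i) f) q = 0" if "degree (lb a b) < i \<or> Q < q" for i q
    using that Q[of i] by (auto simp: coeff_eq_0)
  have curr: "pairing (curr_pure a m b n) f =
      (\<Sum>p\<le>K. sM (of_nat (fact p)) (mu (n p) (pairing_pure a m (coeff (act b f) p)))) -
      (\<Sum>k\<le>K. sM (of_nat (fact k)) (mu (m k) (pairing_pure b n (coeff (act a f) k))))"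
    unfolding pairing_curr_pure_expand[OF bounds(1,2)] pairing_pure_jacobi_expand[OF bounds(3,4)]
    by (rule pairing_jacobi_reindex[where J="degree (lb a b)" and Q=Q, OF E0]) (simp_all add: K_def)
  have "pairing (chain_br (tens a m) (tens b n)) f = pairing (curr_pure a m b n) f +
      pairing_pure b (ser_map (pairing_pure a m) n) f - pairing_pure a (ser_map (pairing_pure b n) m) f"
    by (simp add: chain_br_def curr_br_tens pairing_op_tens pairing_tens lin_add[OF pairing_linear_left]
        lin_diff[OF pairing_linear_left])
  then show ?thesis
    unfolding curr pairing_pure_comp[OF bounds(5)] pairing_pure_comp[OF bounds(6)]
    by (simp add: algebra_simps)
qed

lemma pairing_chain_br: "pairing (chain_br u v) f = pairing u (pairing v f) - pairing v (pairing u f)"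
proof (rule tensor_bilinear_ext[where F="\<lambda>u v. pairing (chain_br u v) f"])
  show "Vector_Spaces.linear sT sM (\<lambda>u. pairing (chain_br u v) f)" for v
    by (rule linear_comp[OF chain_br_linear_left pairing_linear_left])
  show "Vector_Spaces.linear sT sM (\<lambda>v. pairing (chain_br u v) f)" for u
    by (rule linear_comp[OF chain_br_linear_right pairing_linear_left])
  show "Vector_Spaces.linear sT sM (\<lambda>u. pairing u (pairing v f) - pairing v (pairing u f))" for v
    by (rule linear_diff_fun[OF pairing_linear_left linear_comp[OF pairing_linear_left pairing_linear_right]])
  show "Vector_Spaces.linear sT sM (\<lambda>v. pairing u (pairing v f) - pairing v (pairing u f))" for u
    by (rule linear_diff_fun[OF linear_comp[OF pairing_linear_left pairing_linear_right] pairing_linear_left])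
qed (simp add: pairing_chain_br_tens pairing_tens)

lemma pairing_op_chain_br: "pairing_op (chain_br u v) w = pairing_op u (pairing_op v w) - pairing_op v (pairing_op u w)"
  by (rule tensor_linear_ext[OF pairing_op_linear_right linear_diff_fun[OF
        linear_comp[OF pairing_op_linear_right pairing_op_linear_right]
        linear_comp[OF pairing_op_linear_right pairing_op_linear_right]]])
     (simp add: pairing_op_tens ser_map_def pairing_chain_br fun_diff_def flip: tens_diff_right)

lemma curr_br_nested_right_expand:
  assumes "degree (lb b c) \<le> K" and "\<And>j. degree (lb a (coeff (lb b c) j)) \<le> K"
  shows "curr_br (tens a m) (curr_br (tens b n) (tens c p)) =
    (\<Sum>i\<le>K. \<Sum>j\<le>K. tens (coeff (lb a (coeff (lb b c) j)) i)
        (ser_mult mu ((ser_dx sM ^^ i) m) (ser_mult mu ((ser_dx sM ^^ j) n) p)))"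
proof -
  have "curr_br (tens a m) (curr_br (tens b n) (tens c p)) =
      (\<Sum>j\<le>K. \<Sum>i\<le>K. tens (coeff (lb a (coeff (lb b c) j)) i)
        (ser_mult mu ((ser_dx sM ^^ i) m) (ser_mult mu ((ser_dx sM ^^ j) n) p)))"
    by (simp add: curr_br_tens curr_pure_eq_trunc[OF assms(1)] curr_trunc_def
        lin_sum[OF curr_br_linear_right] curr_pure_eq_trunc[OF assms(2)])
  also have "\<dots> = (\<Sum>i\<le>K. \<Sum>j\<le>K. tens (coeff (lb a (coeff (lb b c) j)) i)
        (ser_mult mu ((ser_dx sM ^^ i) m) (ser_mult mu ((ser_dx sM ^^ j) n) p)))"
    by (rule sum.swap)
  finally show ?thesis .
qed

lemma curr_br_nested_left_expand:
  assumes "degree (lb a b) \<le> K" and "\<And>k. degree (lb (coeff (lb a b) k) c) \<le> K"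
  shows "curr_br (curr_br (tens a m) (tens b n)) (tens c p) =
    (\<Sum>k\<le>K. \<Sum>l\<le>K. \<Sum>s\<le>l. sT (of_nat (l choose s)) (tens (coeff (lb (coeff (lb a b) k) c) l)
        (ser_mult mu ((ser_dx sM ^^ (s + k)) m) (ser_mult mu ((ser_dx sM ^^ (l - s)) n) p))))"
proof -
  have "curr_br (curr_br (tens a m) (tens b n)) (tens c p) =
      (\<Sum>k\<le>K. \<Sum>l\<le>K. tens (coeff (lb (coeff (lb a b) k) c) l)
        (ser_mult mu ((ser_dx sM ^^ l) (ser_mult mu ((ser_dx sM ^^ k) m) n)) p))"
    by (simp add: curr_br_tens curr_pure_eq_trunc[OF assms(1)] curr_trunc_def
        lin_sum[OF curr_br_linear_left] curr_pure_eq_trunc[OF assms(2)])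
  also have "\<dots> = (\<Sum>k\<le>K. \<Sum>l\<le>K. \<Sum>s\<le>l. sT (of_nat (l choose s)) (tens (coeff (lb (coeff (lb a b) k) c) l)
        (ser_mult mu ((ser_dx sM ^^ (s + k)) m) (ser_mult mu ((ser_dx sM ^^ (l - s)) n) p))))"
    by (simp add: ser_dx_pow_mult lin_sum[OF ser_mult_linear_left] lin_scale[OF ser_mult_linear_left]
        tens_sum_right tens_scale_right ser_mult_assoc funpow_add)
  finally show ?thesis .
qed

text \<open>The index change (i, j, k) \<mapsto> (k, i + j - k, i - k) matching the Jacobi identity of A
  with Leibniz' rule for the derivatives of m(x) n(x).\<close>

lemma curr_jacobi_reindex:
  fixes G :: "nat \<Rightarrow> nat \<Rightarrow> 'a" and Y :: "nat \<Rightarrow> nat \<Rightarrow> (nat \<Rightarrow> 'm)"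
  assumes G0: "\<And>k l. J < k \<or> Q < l \<Longrightarrow> G k l = 0" and K: "Q + J \<le> K"
  shows "(\<Sum>i\<le>K. \<Sum>j\<le>K. \<Sum>k\<le>i. sT (of_nat ((i + j - k) choose j)) (tens (G k (i + j - k)) (Y i j)))
   = (\<Sum>k\<le>K. \<Sum>l\<le>K. \<Sum>s\<le>l. sT (of_nat (l choose s)) (tens (G k l) (Y (s + k) (l - s))))"
proof -
  define F where "F = (\<lambda>(i, j, k). sT (of_nat ((i + j - k) choose j)) (tens (G k (i + j - k)) (Y i j)))"
  define H where "H = (\<lambda>(k, l, s). sT (of_nat (l choose s)) (tens (G k l) (Y (s + k) (l - s))))"
  have box: "finite {(x, y, z). x \<in> {..K} \<and> y \<in> {..K} \<and> z \<in> {..x}}"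
    "finite {(x, y, z). x \<in> {..K} \<and> y \<in> {..K} \<and> z \<in> {..y}}"
    by (rule finite_subset[of _ "{..K} \<times> {..K} \<times> {..K}"]; auto)+
  have "sum F {(i, j, k). i \<in> {..K} \<and> j \<in> {..K} \<and> k \<in> {..i}} =
        sum H {(k, l, s). k \<in> {..K} \<and> l \<in> {..K} \<and> s \<in> {..l}}"
  proof (rule sum_bij_betw_support[OF box, where S'="{(i, j, k). k \<le> i \<and> k \<le> J \<and> i + j - k \<le> Q}"
        and T'="{(k, l, s). s \<le> l \<and> k \<le> J \<and> l \<le> Q}" and h="\<lambda>(i, j, k). (k, i + j - k, i - k)"])
    show "bij_betw (\<lambda>(i, j, k). (k, i + j - k, i - k)) {(i, j, k). k \<le> i \<and> k \<le> J \<and> i + j - k \<le> Q}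
        {(k, l, s). s \<le> l \<and> k \<le> J \<and> l \<le> Q}"
      by (rule bij_betw_byWitness[where f'="\<lambda>(k, l, s). (s + k, l - s, k)"]) auto
    show "H ((\<lambda>(i, j, k). (k, i + j - k, i - k)) x) = F x"
      if "x \<in> {(i, j, k). k \<le> i \<and> k \<le> J \<and> i + j - k \<le> Q}" for x
    proof -
      from that obtain i j k where x: "x = (i, j, k)" and "k \<le> i" by auto
      then have "i - k + k = i" "i + j - k - (i - k) = j" "(i + j - k) choose (i - k) = (i + j - k) choose j"
        using binomial_symmetric[of "i - k" "i + j - k"] by auto
      then show ?thesis by (simp add: x F_def H_def)
    qed
    show "F x = 0" if "x \<in> {(i, j, k). i \<in> {..K} \<and> j \<in> {..K} \<and> k \<in> {..i}} -
        {(i, j, k). k \<le> i \<and> k \<le> J \<and> i + j - k \<le> Q}" for x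
    proof -
      from that obtain i j k where "x = (i, j, k)" "\<not> (k \<le> J \<and> i + j - k \<le> Q)" by auto
      then show ?thesis by (simp add: F_def G0 not_le)
    qed
    show "H y = 0" if "y \<in> {(k, l, s). k \<in> {..K} \<and> l \<in> {..K} \<and> s \<in> {..l}} -
        {(k, l, s). s \<le> l \<and> k \<le> J \<and> l \<le> Q}" for y
    proof -
      from that obtain k l s where "y = (k, l, s)" "\<not> (k \<le> J \<and> l \<le> Q)" by auto
      then show ?thesis by (simp add: H_def G0 not_le)
    qed
  qed (use K in auto)
  then show ?thesis unfolding F_def H_def by (simp add: sum_nested3 case_prod_beta')
qed

lemma curr_br_leibniz_tens:
  "curr_br (tens a m) (curr_br (tens b n) (tens c p)) =
   curr_br (tens b n) (curr_br (tens a m) (tens c p)) + curr_br (curr_br (tens a m) (tens b n)) (tens c p)"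
proof -
  obtain Q where Q: "\<And>k. degree (lb (coeff (lb a b) k) c) \<le> Q"
    using degree_coeff_image_bounded[of "\<lambda>x. lb x c"] by auto
  obtain QA where QA: "\<And>j. degree (lb a (coeff (lb b c) j)) \<le> QA"
    using degree_coeff_image_bounded[of "lb a"] by auto
  obtain QB where QB: "\<And>i. degree (lb b (coeff (lb a c) i)) \<le> QB"
    using degree_coeff_image_bounded[of "lb b"] by auto
  define K where "K = degree (lb a b) + Q + QA + QB + degree (lb b c) + degree (lb a c)"
  have bounds: "degree (lb a b) \<le> K" "degree (lb (coeff (lb a b) k) c) \<le> K"
    "degree (lb b c) \<le> K" "degree (lb a (coeff (lb b c) j)) \<le> K"
    "degree (lb a c) \<le> K" "degree (lb b (coeff (lb a c) i)) \<le> K" for i j k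
    using Q[of k] QA[of j] QB[of i] by (simp_all add: K_def)
  define Y where "Y i j = ser_mult mu ((ser_dx sM ^^ i) m) (ser_mult mu ((ser_dx sM ^^ j) n) p)" for i j
  define G where "G k l = coeff (lb (coeff (lb a b) k) c) l" for k l
  have G0: "G k l = 0" if "degree (lb a b) < k \<or> Q < l" for k l
    using that Q[of k] by (auto simp: G_def coeff_eq_0)
  have "curr_br (tens a m) (curr_br (tens b n) (tens c p)) - curr_br (tens b n) (curr_br (tens a m) (tens c p)) =
      (\<Sum>i\<le>K. \<Sum>j\<le>K. tens (coeff (lb a (coeff (lb b c) j)) i - coeff (lb b (coeff (lb a c) i)) j) (Y i j))"
    unfolding curr_br_nested_right_expand[OF bounds(3,4)] curr_br_nested_right_expand[OF bounds(5,6)]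
    by (subst (2) sum.swap) (simp add: Y_def ser_mult_left_commute tens_diff_left sum_subtractf)
  also have "\<dots> = (\<Sum>i\<le>K. \<Sum>j\<le>K. \<Sum>k\<le>i. sT (of_nat ((i + j - k) choose j)) (tens (G k (i + j - k)) (Y i j)))"
    by (simp add: lb_jacobi tens_sum_left tens_scale_left G_def)
  also have "\<dots> = (\<Sum>k\<le>K. \<Sum>l\<le>K. \<Sum>s\<le>l. sT (of_nat (l choose s)) (tens (G k l) (Y (s + k) (l - s))))"
    by (rule curr_jacobi_reindex[where J="degree (lb a b)" and Q=Q, OF G0]) (simp_all add: K_def)
  also have "\<dots> = curr_br (curr_br (tens a m) (tens b n)) (tens c p)"
    unfolding curr_br_nested_left_expand[OF bounds(1,2)] by (simp add: G_def Y_def)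
  finally show ?thesis by (simp add: algebra_simps)
qed

lemma curr_br_leibniz: "curr_br u (curr_br v w) = curr_br v (curr_br u w) + curr_br (curr_br u v) w"
proof -
  note L = curr_br_linear_left and R = curr_br_linear_right
  have step_w: "curr_br (tens a m) (curr_br (tens b n) w) =
      curr_br (tens b n) (curr_br (tens a m) w) + curr_br (curr_br (tens a m) (tens b n)) w" for a m b n w
    by (rule tensor_linear_ext[OF linear_comp[OF R R] linear_add_fun[OF linear_comp[OF R R] R]])
       (rule curr_br_leibniz_tens)
  have step_v: "curr_br (tens a m) (curr_br v w) = curr_br v (curr_br (tens a m) w) + curr_br (curr_br (tens a m) v) w"
    for a m v w
    by (rule tensor_linear_ext[OF linear_comp[OF L R] linear_add_fun[OF L linear_comp[OF R L]]])
       (rule step_w)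
  show ?thesis
    by (rule tensor_linear_ext[OF L linear_add_fun[OF linear_comp[OF L R] linear_comp[OF L L]]])
       (rule step_v)
qed

lemmas range_D_x_add = T.subspace_add[OF range_D_x_subspace]
  and range_D_x_diff = T.subspace_diff[OF range_D_x_subspace]
  and range_D_x_neg = T.subspace_neg[OF range_D_x_subspace]
  and range_D_x_scale = T.subspace_scale[OF range_D_x_subspace]
  and range_D_x_sum = T.subspace_sum[OF range_D_x_subspace]

text \<open>Integration by parts: modulo the image of D_x, derivatives can be moved from A to M[[x]].\<close>

lemma tens_dA_pow_equiv:
  "tens ((dA ^^ r) c) f - tens c (ser_scale sM ((-1) ^ r) ((ser_dx sM ^^ r) f)) \<in> range D_x"
proof (induct r arbitrary: f)
  case 0 then show ?case by (simp add: T.subspace_0[OF range_D_x_subspace])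
next
  case (Suc r)
  have "tens ((dA ^^ Suc r) c) f = D_x (tens ((dA ^^ r) c) f) - tens ((dA ^^ r) c) (ser_dx sM f)"
    by (simp add: D_x_tens)
  moreover have "tens c (ser_scale sM ((-1) ^ Suc r) ((ser_dx sM ^^ Suc r) f)) =
      - tens c (ser_scale sM ((-1) ^ r) ((ser_dx sM ^^ r) (ser_dx sM f)))"
    by (simp add: funpow_Suc_right S.scale_minus_left tens_minus_right flip: S.scale_scale del: funpow.simps)
  ultimately have eq: "tens ((dA ^^ Suc r) c) f - tens c (ser_scale sM ((-1) ^ Suc r) ((ser_dx sM ^^ Suc r) f)) =
      D_x (tens ((dA ^^ r) c) f) -
        (tens ((dA ^^ r) c) (ser_dx sM f) - tens c (ser_scale sM ((-1) ^ r) ((ser_dx sM ^^ r) (ser_dx sM f))))"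
    by (simp add: algebra_simps)
  show ?case unfolding eq by (rule range_D_x_diff[OF rangeI Suc])
qed

lemma curr_pure_swap:
  "curr_pure b n a m = - (\<Sum>j\<le>degree (lb a b). \<Sum>k\<le>j. sT ((-1) ^ j * of_nat (j choose k))
      (tens ((dA ^^ (j - k)) (coeff (lb a b) j)) (ser_mult mu ((ser_dx sM ^^ k) n) m)))"
proof -
  have "curr_pure b n a m = curr_trunc (degree (lb a b) + degree (lb b a)) b n a m"
    by (rule curr_pure_eq_trunc) simp
  also have "\<dots> = - (\<Sum>k\<le>degree (lb a b) + degree (lb b a). \<Sum>j\<in>{k..degree (lb a b)}.
      sT ((-1) ^ j * of_nat (j choose k)) (tens ((dA ^^ (j - k)) (coeff (lb a b) j)) (ser_mult mu ((ser_dx sM ^^ k) n) m)))"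
    by (simp add: curr_trunc_def lb_skew[of b a] tens_minus_left tens_sum_left tens_scale_left sum_negf)
  finally show ?thesis by (simp add: sum_swap_triangle)
qed

lemma curr_pure_by_parts:
  "curr_pure a m b n = (\<Sum>j\<le>degree (lb a b). \<Sum>k\<le>j. sT ((-1) ^ j * of_nat (j choose k))
      (tens (coeff (lb a b) j)
        (ser_scale sM ((-1) ^ (j - k)) ((ser_dx sM ^^ (j - k)) (ser_mult mu ((ser_dx sM ^^ k) n) m)))))"
proof -
  have "curr_pure a m b n = (\<Sum>j\<le>degree (lb a b). tens (coeff (lb a b) j) (ser_mult mu n ((ser_dx sM ^^ j) m)))"
    by (simp add: curr_pure_def curr_trunc_def ser_mult_commute)
  also have "\<dots> = (\<Sum>j\<le>degree (lb a b). \<Sum>k\<le>j. sT ((-1) ^ j * of_nat (j choose k))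
      (tens (coeff (lb a b) j)
        (ser_scale sM ((-1) ^ (j - k)) ((ser_dx sM ^^ (j - k)) (ser_mult mu ((ser_dx sM ^^ k) n) m)))))"
    by (simp add: tens_sum_right S.scale_scale minus_one_power_diff_mult
        flip: ser_mult_dx_pow_by_parts tens_scale_right)
  finally show ?thesis .
qed

lemma curr_pure_skew: "curr_pure a m b n + curr_pure b n a m \<in> range D_x"
proof -
  have "curr_pure a m b n + curr_pure b n a m =
      - (\<Sum>j\<le>degree (lb a b). \<Sum>k\<le>j. sT ((-1) ^ j * of_nat (j choose k))
          (tens ((dA ^^ (j - k)) (coeff (lb a b) j)) (ser_mult mu ((ser_dx sM ^^ k) n) m) -
           tens (coeff (lb a b) j)
             (ser_scale sM ((-1) ^ (j - k)) ((ser_dx sM ^^ (j - k)) (ser_mult mu ((ser_dx sM ^^ k) n) m)))))"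
    unfolding curr_pure_by_parts[of a m b n] curr_pure_swap[of b n a m] by (simp add: T.scale_right_diff_distrib sum_subtractf)
  then show ?thesis
    by (simp only: range_D_x_neg range_D_x_sum range_D_x_scale tens_dA_pow_equiv)
qed

lemma curr_br_skew: "curr_br u v + curr_br v u \<in> range D_x"
proof -
  have pure: "curr_br u (tens b n) + curr_br (tens b n) u \<in> range D_x" for b n
    by (rule tensor_induct[OF linear_subspace_preimage[OF
          linear_add_fun[OF curr_br_linear_left curr_br_linear_right] range_D_x_subspace]])
       (simp add: curr_br_tens curr_pure_skew)
  show ?thesis
    by (rule tensor_induct[OF linear_subspace_preimage[OF
          linear_add_fun[OF curr_br_linear_right curr_br_linear_left] range_D_x_subspace]])
       (rule pure)
qed

lemma curr_br_D_x_range: "x \<in> range D_x \<Longrightarrow> curr_br v x \<in> range D_x"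
  by (auto simp: curr_br_D_x_right)

lemma curr_pure_ser_dx_both: "curr_pure a (ser_dx sM m) b n + curr_pure a m b (ser_dx sM n) =
    (\<Sum>j\<le>degree (lb a b). tens (coeff (lb a b) j) (ser_dx sM (ser_mult mu ((ser_dx sM ^^ j) m) n)))"
  by (simp add: curr_pure_def curr_trunc_def ser_dx_mult funpow_swap1 tens_add_right sum.distrib)

lemma curr_pure_dA_both: "curr_pure (dA a) m b n + curr_pure a m (dA b) n =
    (\<Sum>j\<le>degree (lb a b). tens (dA (coeff (lb a b) j)) (ser_mult mu ((ser_dx sM ^^ j) m) n))"
proof -
  have "D_x (curr_pure a m b n) =
      (\<Sum>j\<le>degree (lb a b). tens (dA (coeff (lb a b) j)) (ser_mult mu ((ser_dx sM ^^ j) m) n)) +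
      (curr_pure a (ser_dx sM m) b n + curr_pure a m b (ser_dx sM n))"
    unfolding curr_pure_ser_dx_both
    by (simp add: curr_pure_def curr_trunc_def lin_sum[OF D_x_linear] D_x_tens sum.distrib)
  moreover have "curr_pure (dA a) m b n = - curr_pure a (ser_dx sM m) b n"
    using curr_pure_D_x_left[of a m b n] by (simp add: eq_neg_iff_add_eq_0)
  moreover have "curr_pure a m (dA b) n = D_x (curr_pure a m b n) - curr_pure a m b (ser_dx sM n)"
    using curr_pure_D_x_right[of a m b n] by (simp add: eq_diff_eq)
  ultimately show ?thesis by simp
qed

lemma curr_pure_D_M:
  "curr_pure (dA a) m b n + curr_pure a m (dA b) n + (curr_pure a (ser_map dM m) b n + curr_pure a m b (ser_map dM n))
   = D_M (curr_pure a m b n)"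
proof -
  have "curr_pure a (ser_map dM m) b n + curr_pure a m b (ser_map dM n) =
      (\<Sum>j\<le>degree (lb a b). tens (coeff (lb a b) j) (ser_map dM (ser_mult mu ((ser_dx sM ^^ j) m) n)))"
    by (simp add: curr_pure_def curr_trunc_def ser_map_derivation[OF dM_linear dM_derivation]
        ser_map_dx_pow[OF dM_linear] tens_add_right sum.distrib)
  moreover have "D_M (curr_pure a m b n) =
      (\<Sum>j\<le>degree (lb a b). tens (dA (coeff (lb a b) j)) (ser_mult mu ((ser_dx sM ^^ j) m) n)) +
      (\<Sum>j\<le>degree (lb a b). tens (coeff (lb a b) j) (ser_map dM (ser_mult mu ((ser_dx sM ^^ j) m) n)))"
    by (simp add: curr_pure_def curr_trunc_def lin_sum[OF D_M_linear] D_M_tens sum.distrib)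
  ultimately show ?thesis unfolding curr_pure_dA_both by simp
qed

lemma D_M_curr_br: "D_M (curr_br u v) = curr_br (D_M u) v + curr_br u (D_M v)"
proof (rule tensor_bilinear_ext[where F="\<lambda>u v. D_M (curr_br u v)"])
  show "Vector_Spaces.linear sT sT (\<lambda>u. D_M (curr_br u v))" for v
    by (rule linear_comp[OF curr_br_linear_left D_M_linear])
  show "Vector_Spaces.linear sT sT (\<lambda>v. D_M (curr_br u v))" for u
    by (rule linear_comp[OF curr_br_linear_right D_M_linear])
  show "Vector_Spaces.linear sT sT (\<lambda>u. curr_br (D_M u) v + curr_br u (D_M v))" for v
    by (rule linear_add_fun[OF linear_comp[OF D_M_linear curr_br_linear_left] curr_br_linear_left])
  show "Vector_Spaces.linear sT sT (\<lambda>v. curr_br (D_M u) v + curr_br u (D_M v))" for u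
    by (rule linear_add_fun[OF curr_br_linear_right linear_comp[OF D_M_linear curr_br_linear_right]])
qed (simp add: D_M_tens lin_add[OF curr_br_linear_left] lin_add[OF curr_br_linear_right] curr_br_tens
      flip: curr_pure_D_M)

lemma pairing_pure_D_M:
  "pairing_pure (dA a) m f + pairing_pure a (ser_map dM m) f = dM (pairing_pure a m f) - pairing_pure a m (dM f)"
proof -
  define N where "N = max (degree (act a f)) (max (degree (act (dA a) f)) (degree (act a (dM f))))"
  define e where "e p = coeff (act a f) p" for p
  have "pairing_pure (dA a) m f + pairing_pure a (ser_map dM m) f =
      (\<Sum>p\<le>N. sM (of_nat (fact p)) (mu (m p) (if p = 0 then 0 else - e (p - 1)) + mu (dM (m p)) (e p)))"
    unfolding e_def
    by (simp add: pairing_pure_eq_trunc[of _ _ N] N_def pairing_trunc_def act_sesq_left ser_map_def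
        sum.distrib M.scale_right_distrib)
  also have "\<dots> = (\<Sum>p\<le>N. sM (of_nat (fact p))
      (mu (dM (m p)) (e p) + mu (m p) (dM (e p)) - mu (m p) (dM (e p) + (if p = 0 then 0 else e (p - 1)))))"
    by (intro sum.cong refl arg_cong[where f="sM _"]) (simp add: mu_add_right mu_minus_right)
  also have "\<dots> = dM (pairing_pure a m f) - pairing_pure a m (dM f)"
    unfolding e_def
    by (simp add: pairing_pure_eq_trunc[of _ _ N] N_def pairing_trunc_def act_sesq_right lin_sum[OF dM_linear]
        lin_scale[OF dM_linear] dM_derivation sum_subtractf[symmetric] M.scale_right_diff_distrib)
  finally show ?thesis .
qed

lemma pairing_D_M: "pairing (D_M u) f = dM (pairing u f) - pairing u (dM f)"
  by (rule tensor_linear_ext[OF linear_comp[OF D_M_linear pairing_linear_left]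
        linear_diff_fun[OF linear_comp[OF pairing_linear_left dM_linear] pairing_linear_left]])
     (simp add: D_M_tens lin_add[OF pairing_linear_left] pairing_tens pairing_pure_D_M)

lemma D_M_pairing_op: "D_M (pairing_op u v) = pairing_op (D_M u) v + pairing_op u (D_M v)"
proof (rule tensor_linear_ext[OF linear_comp[OF pairing_op_linear_right D_M_linear]
      linear_add_fun[OF pairing_op_linear_right linear_comp[OF D_M_linear pairing_op_linear_right]]])
  have "ser_map dM (ser_map (pairing u) n) = ser_map (pairing (D_M u)) n + ser_map (pairing u) (ser_map dM n)" for n
    by (rule ext) (simp add: ser_map_def pairing_D_M)
  then show "D_M (pairing_op u (tens b n)) = pairing_op (D_M u) (tens b n) + pairing_op u (D_M (tens b n))" for b n
    by (simp add: pairing_op_tens D_M_tens lin_add[OF pairing_op_linear_right] tens_add_right)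
qed

lemma D_M_D_x_commute: "D_M (D_x u) = D_x (D_M u)"
  by (rule tensor_linear_ext[OF linear_comp[OF D_x_linear D_M_linear] linear_comp[OF D_M_linear D_x_linear]])
     (simp add: D_M_tens D_x_tens lin_add[OF D_M_linear] lin_add[OF D_x_linear] ser_map_dx[OF dM_linear]
      algebra_simps)

lemma chain_br_D_x_left: "chain_br (D_x u) v \<in> range D_x"
proof -
  have "chain_br (D_x u) v = D_x (- pairing_op v u)"
    by (simp add: chain_br_def curr_br_D_x_left pairing_op_D_x_left pairing_op_D_x_right lin_neg[OF D_x_linear])
  then show ?thesis by simp
qed

lemma chain_br_D_x_right: "chain_br u (D_x v) \<in> range D_x"
proof -
  have "chain_br u (D_x v) = D_x (curr_br u v + pairing_op u v)"
    by (simp add: chain_br_def curr_br_D_x_right pairing_op_D_x_left pairing_op_D_x_right lin_add[OF D_x_linear])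
  then show ?thesis by simp
qed

lemma chain_br_self: "chain_br u u \<in> range D_x"
proof -
  have "curr_br u u + curr_br u u = sT 2 (curr_br u u)"
    using T.scale_left_distrib[of 1 1 "curr_br u u"] by simp
  then have "chain_br u u = sT (1 / 2) (curr_br u u + curr_br u u)"
    by (simp add: chain_br_def)
  then show ?thesis using range_D_x_scale[OF curr_br_skew[of u u]] by simp
qed

text \<open>Modulo the image of D_x the current part is a Lie bracket (left Leibniz rule and skew
  symmetry), R is a representation by derivations of it, and the cross terms cancel in pairs.\<close>

lemma chain_br_jacobi: "chain_br u (chain_br v w) + chain_br v (chain_br w u) + chain_br w (chain_br u v) \<in> range D_x"
proof -
  have expand: "chain_br u (chain_br v w) = curr_br u (curr_br v w) + curr_br u (pairing_op v w)
      - curr_br u (pairing_op w v) + curr_br (pairing_op u v) w + curr_br v (pairing_op u w)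
      + pairing_op u (pairing_op v w) - pairing_op u (pairing_op w v)
      - (pairing_op v (pairing_op w u) - pairing_op w (pairing_op v u))" for u v w
  proof -
    have "chain_br u (chain_br v w) =
        curr_br u (chain_br v w) + pairing_op u (chain_br v w) - (pairing_op v (pairing_op w u) - pairing_op w (pairing_op v u))"
      by (simp only: chain_br_def[of u "chain_br v w"] pairing_op_chain_br)
    moreover have "curr_br u (chain_br v w) = curr_br u (curr_br v w) + curr_br u (pairing_op v w) - curr_br u (pairing_op w v)"
      by (simp add: chain_br_def lin_add[OF curr_br_linear_right] lin_diff[OF curr_br_linear_right])
    moreover have "pairing_op u (chain_br v w) =
        curr_br (pairing_op u v) w + curr_br v (pairing_op u w) + pairing_op u (pairing_op v w) - pairing_op u (pairing_op w v)"
      by (simp add: chain_br_def lin_add[OF pairing_op_linear_right] lin_diff[OF pairing_op_linear_right]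
          pairing_op_curr_br)
    ultimately show ?thesis by (simp add: algebra_simps)
  qed
  define X1 where "X1 = curr_br v (curr_br u w + curr_br w u) + (curr_br (curr_br u v) w + curr_br w (curr_br u v))"
  define X2 where "X2 = (curr_br u (pairing_op v w) + curr_br (pairing_op v w) u) +
    (curr_br v (pairing_op w u) + curr_br (pairing_op w u) v) + (curr_br w (pairing_op u v) + curr_br (pairing_op u v) w)"
  have "chain_br u (chain_br v w) + chain_br v (chain_br w u) + chain_br w (chain_br u v) = X1 + X2"
    unfolding expand X1_def X2_def curr_br_leibniz[of u v w]
    by (simp add: lin_add[OF curr_br_linear_right] algebra_simps)
  moreover have "X1 \<in> range D_x"
    unfolding X1_def by (rule range_D_x_add[OF curr_br_D_x_range[OF curr_br_skew] curr_br_skew])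
  moreover have "X2 \<in> range D_x"
    unfolding X2_def by (rule range_D_x_add[OF range_D_x_add[OF curr_br_skew curr_br_skew] curr_br_skew])
  ultimately show ?thesis by (simp add: range_D_x_add)
qed

lemma D_M_chain_br: "D_M (chain_br u v) = chain_br (D_M u) v + chain_br u (D_M v)"
  by (simp add: chain_br_def lin_add[OF D_M_linear] lin_diff[OF D_M_linear] D_M_curr_br D_M_pairing_op
      algebra_simps)

lemma D_M_minus_D_x_derivation:
  "D_M (chain_br u v) - D_x (chain_br u v) - (chain_br (D_M u - D_x u) v + chain_br u (D_M v - D_x v))
   \<in> range D_x"
proof -
  have "D_M (chain_br u v) - D_x (chain_br u v) - (chain_br (D_M u - D_x u) v + chain_br u (D_M v - D_x v)) =
      (chain_br (D_x u) v + chain_br u (D_x v)) - D_x (chain_br u v)"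
    by (simp add: D_M_chain_br lin_diff[OF chain_br_linear_left] lin_diff[OF chain_br_linear_right]
        algebra_simps)
  then show ?thesis
    by (simp only: range_D_x_diff range_D_x_add chain_br_D_x_left chain_br_D_x_right rangeI)
qed

lemma D_M_minus_D_x_kernel:
  assumes "D_M u - D_x u \<in> range D_x" and "D_M v - D_x v \<in> range D_x"
  shows "D_M (chain_br u v) - D_x (chain_br u v) \<in> range D_x"
proof -
  have "chain_br (D_M u - D_x u) v \<in> range D_x" "chain_br u (D_M v - D_x v) \<in> range D_x"
    using assms chain_br_D_x_left chain_br_D_x_right by auto
  then have "D_M (chain_br u v) - D_x (chain_br u v) - (chain_br (D_M u - D_x u) v + chain_br u (D_M v - D_x v)) +
      (chain_br (D_M u - D_x u) v + chain_br u (D_M v - D_x v)) \<in> range D_x"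
    using D_M_minus_D_x_derivation by (simp only: range_D_x_add)
  then show ?thesis by simp
qed

end

lemma lca_module_algebraI:
  assumes "lie_conformal_algebra sA dA lb" "lca_module sA dA lb sM dM act"
    "derivation_algebra sM dM act mu" "tensor_product sA (ser_scale sM) sT tens"
  shows "lca_module_algebra sA sM mu sT tens dA lb dM act"
  using assms
  by (intro lca_module_algebra.intro series_product.intro tensor_prod.intro lca_module_algebra_axioms.intro)
     (auto simp: derivation_algebra_def)

theorem lemma3p7:
  fixes sA :: "'k::field_char_0 \<Rightarrow> 'a::ab_group_add \<Rightarrow> 'a"
    and dA :: "'a \<Rightarrow> 'a"
    and lb :: "'a \<Rightarrow> 'a \<Rightarrow> 'a poly"
    and sM :: "'k \<Rightarrow> 'm::ab_group_add \<Rightarrow> 'm"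
    and dM :: "'m \<Rightarrow> 'm"
    and act :: "'a \<Rightarrow> 'm \<Rightarrow> 'm poly"
    and mu :: "'m \<Rightarrow> 'm \<Rightarrow> 'm"
    and sT :: "'k \<Rightarrow> 't::ab_group_add \<Rightarrow> 't"
    and tens :: "'a \<Rightarrow> (nat \<Rightarrow> 'm) \<Rightarrow> 't"
    and D0 D P :: "'t \<Rightarrow> 't"
  assumes LCA: "lie_conformal_algebra sA dA lb"
    and MOD: "lca_module sA dA lb sM dM act"
    and PROD: "derivation_algebra sM dM act mu"
    and TENS: "tensor_product sA (ser_scale sM) sT tens"
    and D0_lin: "Vector_Spaces.linear sT sT D0"
    and D0_def: "\<And>a m. D0 (tens a m) = tens (dA a) m + tens a (ser_dx sM m)"
    and D_lin: "Vector_Spaces.linear sT sT D"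
    and D_def: "\<And>a m. D (tens a m) = tens (dA a) m + tens a (ser_map dM m)"
    and P_lin: "Vector_Spaces.linear sT sT P"
    and P_def: "\<And>a m. P (tens a m) = tens a (ser_map dM m - ser_dx sM m)"
  shows
    "(\<exists>br. bilinear_map sT br \<and>
        (\<forall>a m b n. br (tens a m) (tens b n) = chain_bracket_pure sM lb act mu tens a m b n)) \<and>
     (\<forall>br. bilinear_map sT br \<and>
        (\<forall>a m b n. br (tens a m) (tens b n) = chain_bracket_pure sM lb act mu tens a m b n)
      \<longrightarrow>
        \<comment> \<open>(a) well defined Lie bracket on g = T / range D0\<close>
        (\<forall>u v. br (D0 u) v \<in> range D0 \<and> br u (D0 v) \<in> range D0) \<and>
        (\<forall>u. br u u \<in> range D0) \<and>
        (\<forall>u v w. br u (br v w) + br v (br w u) + br w (br u v) \<in> range D0) \<and>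
        \<comment> \<open>(b) d (x) 1 + 1 (x) d^M is a derivation of the bracket on T\<close>
        (\<forall>u v. D (br u v) = br (D u) v + br u (D v)) \<and>
        \<comment> \<open>the induced operator on g is well defined and a derivation of g\<close>
        (\<forall>u. P (D0 u) \<in> range D0) \<and>
        (\<forall>u v. P (br u v) - (br (P u) v + br u (P v)) \<in> range D0) \<and>
        \<comment> \<open>its kernel g^d is a Lie subalgebra\<close>
        (\<forall>u v. P u \<in> range D0 \<longrightarrow> P v \<in> range D0 \<longrightarrow> P (br u v) \<in> range D0))"
proof -
  interpret lca_module_algebra sA sM mu sT tens dA lb dM act
    by (rule lca_module_algebraI[OF LCA MOD PROD TENS])
  have D0: "D0 = D_x"
    by (rule ext, rule tensor_linear_ext[OF D0_lin D_x_linear]) (simp add: D0_def D_x_tens)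
  have D: "D = D_M"
    by (rule ext, rule tensor_linear_ext[OF D_lin D_M_linear]) (simp add: D_def D_M_tens)
  have P: "P = (\<lambda>u. D_M u - D_x u)"
    by (rule ext, rule tensor_linear_ext[OF P_lin linear_diff_fun[OF D_M_linear D_x_linear]])
       (simp add: P_def D_M_tens D_x_tens tens_diff_right)
  have unique: "br = chain_br" if "bilinear_map sT br"
    and "\<forall>a m b n. br (tens a m) (tens b n) = chain_bracket_pure sM lb act mu tens a m b n" for br
  proof (intro ext)
    show "br u v = chain_br u v" for u v
      by (rule tensor_bilinear_ext)
         (use that chain_br_linear_left chain_br_linear_right chain_br_tens in \<open>auto simp: bilinear_map_def\<close>)
  qed
  have "bilinear_map sT chain_br"
    using chain_br_linear_left chain_br_linear_right by (simp add: bilinear_map_def)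
  then have exists: "\<exists>br. bilinear_map sT br \<and>
      (\<forall>a m b n. br (tens a m) (tens b n) = chain_bracket_pure sM lb act mu tens a m b n)"
    using chain_br_tens by blast
  have "D_M (D_x u) - D_x (D_x u) \<in> range D_x" for u
    by (simp add: D_M_D_x_commute flip: lin_diff[OF D_x_linear])
  with exists show ?thesis
    unfolding D0 D P
    by (auto dest!: unique intro: chain_br_D_x_left chain_br_D_x_right chain_br_self chain_br_jacobi
        D_M_chain_br D_M_minus_D_x_derivation D_M_minus_D_x_kernel)
qed

end
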